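(* Let $N\ge2$, $m=[N/2]$, $\lambda=(\lambda_1,\dots,\lambda_N)\in\mathbb{C}^N$ and $\kappa^\pm=(\kappa^\pm_1,\dots,\kappa^\pm_m)\in(0,\infty)^m$. For $j=1,\dots,m$ let $\alpha^\pm_j=e_{2j-1}\pm e_{2j}$ and let $\tau^\pm_j$ be the orthogonal projection onto $(\alpha_j^\pm)^\perp$, $\tau^\pm_jx=x-\frac{\langle x,\alpha^\pm_j\rangle}{2}\alpha^\pm_j$. For $\xi\in\mathbb{R}^N$ define $$(T_\xi f)(x)=\partial_\xi f(x)+\sum_{j=1}^m\Big(\kappa^-_j\langle\alpha^-_j,\xi\rangle\frac{f(x)-f(\tau^-_jx)}{\langle x,\alpha^-_j\rangle}+\kappa^+_j\langle\alpha^+_j,\xi\rangle\frac{f(x)-f(\tau^+_jx)}{\langle x,\alpha^+_j\rangle}\Big),$$ extended complex-linearly to $\xi\in\mathbb{C}^N$. Let $h(0,x)=x-\sum_{j=1}^m\sum_{\pm}\frac{\langle x,\alpha^\pm_j\rangle}{2}\alpha^\pm_j$. Then the problem $$T_\xi f=i\langle\lambda,\xi\rangle f\ \ \text{for all }\xi\in\mathbb{C}^N,\qquad f(0)=1,$$ has a unique analytic solution, given by $$M_\kappa(\lambda,x)=e^{i\langle\lambda,h(0,x)\rangle}\prod_{j=1}^m M_{\kappa^-_j}\Big(\tfrac{i}{2}(\lambda_{2j-1}-\lambda_{2j})(x_{2j-1}-x_{2j})\Big)\,M_{\kappa^+_j}\Big(\tfrac{i}{2}(\lambda_{2j-1}+\lambda_{2j})(x_{2j-1}+x_{2j})\Big),$$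 where $M_{c}(z)=M(1,c+1;z)=\sum_{n\ge0}\frac{z^n}{(c+1)_n}$.
   Context: $e_1,\dots,e_N$ is the standard basis of $\mathbb{R}^N$, $\langle\cdot,\cdot\rangle$ the (bilinear) standard pairing, $\partial_\xi$ the directional derivative, $[N/2]$ the integer part, $(a)_n=\Gamma(a+n)/\Gamma(a)$. For analytic $f$ the difference quotients are understood as their analytic extensions across the hyperplanes $\langle x,\alpha^\pm_j\rangle=0$. The vectors $\alpha^\pm_j$ form a positive orthogonal subsystem of the root system $B_N=\{\pm e_i\pm e_j\ (i<j),\ \pm e_i\}$. *)

theory Defs
  imports "HOL-Analysis.Analysis"
begin

text \<open>Coordinates: \<open>idx :: nat \<Rightarrow> 'n\<close> enumerates the coordinates of \<open>real ^ 'n\<close>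
  as \<open>1..N\<close>; the standard basis vector \<open>e_k\<close> is \<open>axis (idx k) 1\<close>.\<close>

definition ebas :: "(nat \<Rightarrow> 'n::finite) \<Rightarrow> nat \<Rightarrow> real ^ 'n" where
  "ebas idx k = axis (idx k) 1"

definition alpha_minus :: "(nat \<Rightarrow> 'n::finite) \<Rightarrow> nat \<Rightarrow> real ^ 'n" where
  "alpha_minus idx j = ebas idx (2*j - 1) - ebas idx (2*j)"

definition alpha_plus :: "(nat \<Rightarrow> 'n::finite) \<Rightarrow> nat \<Rightarrow> real ^ 'n" where
  "alpha_plus idx j = ebas idx (2*j - 1) + ebas idx (2*j)"

text \<open>Orthogonal projection onto the hyperplane orthogonal to \<open>a\<close> (\<open>|a|^2 = 2\<close>).\<close>
definition tau :: "real ^ 'n \<Rightarrow> real ^ 'n \<Rightarrow> real ^ 'n" where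
  "tau a x = x - (inner x a / 2) *\<^sub>R a"

definition real_analytic_on :: "(real ^ 'n::finite \<Rightarrow> complex) \<Rightarrow> (real ^ 'n) set \<Rightarrow> bool" where
  "real_analytic_on f S \<longleftrightarrow>
     (\<forall>a\<in>S. \<exists>r>0. \<exists>c :: ('n \<Rightarrow> nat) \<Rightarrow> complex.
        \<forall>x. dist x a < r \<longrightarrow>
          ((\<lambda>\<alpha>. c \<alpha> * complex_of_real (\<Prod>i\<in>UNIV. (x $ i - a $ i) ^ \<alpha> i)) has_sum f x) UNIV)"

definition dirderiv :: "(real ^ 'n::finite \<Rightarrow> complex) \<Rightarrow> real ^ 'n \<Rightarrow> real ^ 'n \<Rightarrow> complex" where
  "dirderiv f \<xi> x = vector_derivative (\<lambda>t::real. f (x + t *\<^sub>R \<xi>)) (at 0)"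

definition diffquot :: "(real ^ 'n::finite \<Rightarrow> complex) \<Rightarrow> real ^ 'n \<Rightarrow> real ^ 'n \<Rightarrow> complex" where
  "diffquot f a x = (f x - f (tau a x)) / complex_of_real (inner x a)"

definition T_real :: "(nat \<Rightarrow> 'n::finite) \<Rightarrow> nat \<Rightarrow> (nat \<Rightarrow> real) \<Rightarrow> (nat \<Rightarrow> real)
    \<Rightarrow> (real ^ 'n \<Rightarrow> complex) \<Rightarrow> real ^ 'n \<Rightarrow> real ^ 'n \<Rightarrow> complex" where
  "T_real idx N km kp f \<xi> x =
     dirderiv f \<xi> x +
     (\<Sum>j=1..N div 2.
        complex_of_real (km j * inner (alpha_minus idx j) \<xi>) * diffquot f (alpha_minus idx j) x
      + complex_of_real (kp j * inner (alpha_plus idx j) \<xi>) * diffquot f (alpha_plus idx j) x)"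

definition T_cplx :: "(nat \<Rightarrow> 'n::finite) \<Rightarrow> nat \<Rightarrow> (nat \<Rightarrow> real) \<Rightarrow> (nat \<Rightarrow> real)
    \<Rightarrow> (real ^ 'n \<Rightarrow> complex) \<Rightarrow> complex ^ 'n \<Rightarrow> real ^ 'n \<Rightarrow> complex" where
  "T_cplx idx N km kp f \<xi> x =
     T_real idx N km kp f (\<chi> i. Re (\<xi> $ i)) x + \<i> * T_real idx N km kp f (\<chi> i. Im (\<xi> $ i)) x"

definition cpair :: "complex ^ 'n::finite \<Rightarrow> complex ^ 'n \<Rightarrow> complex" where
  "cpair u v = (\<Sum>i\<in>UNIV. u $ i * v $ i)"

definition rpair :: "complex ^ 'n::finite \<Rightarrow> real ^ 'n \<Rightarrow> complex" where
  "rpair u y = (\<Sum>i\<in>UNIV. u $ i * complex_of_real (y $ i))"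

definition h0 :: "(nat \<Rightarrow> 'n::finite) \<Rightarrow> nat \<Rightarrow> real ^ 'n \<Rightarrow> real ^ 'n" where
  "h0 idx N x = x - (\<Sum>j=1..N div 2.
        (inner x (alpha_minus idx j) / 2) *\<^sub>R alpha_minus idx j
      + (inner x (alpha_plus idx j) / 2) *\<^sub>R alpha_plus idx j)"

definition Mconf :: "real \<Rightarrow> complex \<Rightarrow> complex" where
  "Mconf c z = (\<Sum>n. z ^ n / pochhammer (complex_of_real c + 1) n)"

definition Mkappa :: "(nat \<Rightarrow> 'n::finite) \<Rightarrow> nat \<Rightarrow> (nat \<Rightarrow> real) \<Rightarrow> (nat \<Rightarrow> real)
    \<Rightarrow> complex ^ 'n \<Rightarrow> real ^ 'n \<Rightarrow> complex" where
  "Mkappa idx N km kp lam x =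
     exp (\<i> * rpair lam (h0 idx N x)) *
     (\<Prod>j=1..N div 2.
        Mconf (km j) (\<i> / 2 * (lam $ idx (2*j-1) - lam $ idx (2*j))
                      * complex_of_real (x $ idx (2*j-1) - x $ idx (2*j)))
      * Mconf (kp j) (\<i> / 2 * (lam $ idx (2*j-1) + lam $ idx (2*j))
                      * complex_of_real (x $ idx (2*j-1) + x $ idx (2*j))))"

text \<open>Eigenvalue problem, required at every point off the hyperplanes
  \<open>\<langle>x,\<alpha>^\<pm>_j\<rangle> = 0\<close> (for analytic \<open>f\<close> this is equivalent to the equation on all
  of \<open>\<real>^N\<close> with the difference quotients analytically extended).\<close>
definition solves_eigen :: "(nat \<Rightarrow> 'n::finite) \<Rightarrow> nat \<Rightarrow> (nat \<Rightarrow> real) \<Rightarrow> (nat \<Rightarrow> real)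
    \<Rightarrow> complex ^ 'n \<Rightarrow> (real ^ 'n \<Rightarrow> complex) \<Rightarrow> bool" where
  "solves_eigen idx N km kp lam f \<longleftrightarrow>
     (\<forall>\<xi> :: complex ^ 'n. \<forall>x :: real ^ 'n.
        (\<forall>j\<in>{1..N div 2}. inner x (alpha_minus idx j) \<noteq> 0 \<and> inner x (alpha_plus idx j) \<noteq> 0)
        \<longrightarrow> T_cplx idx N km kp f \<xi> x = \<i> * cpair lam \<xi> * f x)"

end

(*
  On a line x + t a in the direction of a root a the eigenvalue equation for f becomes
  phi' + kappa (phi t - phi 0) / t = i mu phi, and its only solution continuous at 0 is
  phi 0 * M_kappa (i mu t).
  As the roots are mutually orthogonal, projecting away one root after the other (and e_N, with
  kappa = 0, when N is odd) gives f x = f 0 * exp (i <lam, h(0,x)>) * product of the M factors.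
  The equation only holds off the hyperplanes <x, a> = 0, but their complement is dense and f is
  continuous.

  Along each root direction M_kappa(lam, .) is a constant times M_c (w (u + 2 s)), and
  Kummer's equation integrated once, z M_c' + c (M_c - 1) = z M_c, is exactly the eigenvalue
  equation in that direction. Both sides of the equation are linear in xi, and the roots together
  with e_N span R^N. Analyticity holds because every factor is an entire function of a linear
  form in at most two coordinates.
*)

theory Submission
  imports Defs "HOL-Complex_Analysis.Cauchy_Integral_Formula"
begin

section \<open>The confluent hypergeometric function \<open>M(1, c + 1; z)\<close>\<close>

definition Mconf_coeff :: "real \<Rightarrow> nat \<Rightarrow> complex" where
  "Mconf_coeff c n = inverse (pochhammer (of_real c + 1) n)"

lemma Mconf_eq_power_series: "Mconf c z = (\<Sum>n. Mconf_coeff c n * z ^ n)"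
  unfolding Mconf_def Mconf_coeff_def by (simp add: field_simps)

lemma pochhammer_ge_fact:
  fixes c :: real
  assumes "c \<ge> 0"
  shows "fact n \<le> pochhammer (c + 1) n"
proof (induction n)
  case (Suc n)
  have "fact (Suc n) = fact n * (1 + real n)" by (simp add: algebra_simps)
  also have "\<dots> \<le> pochhammer (c + 1) n * (c + 1 + real n)"
    using Suc assms by (intro mult_mono) (auto intro: order_trans[OF fact_ge_zero])
  finally show ?case by (simp add: pochhammer_Suc)
qed simp

lemma Mconf_coeff_eq: "Mconf_coeff c n = of_real (inverse (pochhammer (c + 1) n))"
  unfolding Mconf_coeff_def by (metis of_real_1 of_real_add of_real_inverse pochhammer_of_real)

lemma norm_Mconf_coeff_le:
  assumes "c \<ge> 0"
  shows "norm (Mconf_coeff c n) \<le> inverse (fact n)"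
proof -
  have "0 < (fact n :: real)" "fact n \<le> pochhammer (c + 1) n"
    using pochhammer_ge_fact[OF assms] by auto
  then show ?thesis
    by (simp add: Mconf_coeff_eq norm_inverse le_imp_inverse_le)
qed

lemma Mconf_coeff_Suc:
  assumes "c \<ge> 0"
  shows "(of_nat (Suc n) + of_real c) * Mconf_coeff c (Suc n) = Mconf_coeff c n"
proof -
  have "pochhammer (c + 1) n > 0" "c + 1 + real n > 0"
    using pochhammer_ge_fact[OF assms, of n] assms by (auto intro: order_less_le_trans[OF fact_gt_zero])
  then have "(real (Suc n) + c) * inverse (pochhammer (c + 1) (Suc n)) = inverse (pochhammer (c + 1) n)"
    by (simp add: pochhammer_Suc inverse_mult_distrib add_ac)
  from arg_cong[OF this, of complex_of_real] show ?thesis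
    by (simp add: Mconf_coeff_eq)
qed

lemma summable_Mconf:
  assumes "c \<ge> 0"
  shows "summable (\<lambda>n. Mconf_coeff c n * z ^ n)"
proof (rule summable_comparison_test)
  show "\<exists>N. \<forall>n\<ge>N. norm (Mconf_coeff c n * z ^ n) \<le> norm z ^ n / fact n"
  proof (intro exI allI impI)
    fix n :: nat
    have "norm (Mconf_coeff c n) * norm z ^ n \<le> inverse (fact n) * norm z ^ n"
      by (rule mult_right_mono[OF norm_Mconf_coeff_le[OF assms]]) simp
    then show "norm (Mconf_coeff c n * z ^ n) \<le> norm z ^ n / fact n"
      by (simp add: norm_mult norm_power divide_inverse mult.commute)
  qed
  show "summable (\<lambda>n. norm z ^ n / fact n)"
    using summable_exp[of "norm z"] by (simp add: divide_inverse mult.commute)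
qed

definition Mconf' :: "real \<Rightarrow> complex \<Rightarrow> complex" where
  "Mconf' c z = (\<Sum>n. diffs (Mconf_coeff c) n * z ^ n)"

lemma has_field_derivative_Mconf:
  assumes "c \<ge> 0"
  shows "(Mconf c has_field_derivative Mconf' c z) (at z)"
  unfolding Mconf_eq_power_series[abs_def] Mconf'_def
  by (rule termdiffs_strong_converges_everywhere) (rule summable_Mconf[OF assms])

lemma holomorphic_Mconf: "c \<ge> 0 \<Longrightarrow> Mconf c holomorphic_on UNIV"
  using has_field_derivative_Mconf field_differentiable_at_within field_differentiable_def
  unfolding holomorphic_on_def by blast

lemma isCont_Mconf: "c \<ge> 0 \<Longrightarrow> isCont (Mconf c) z"
  using has_field_derivative_Mconf DERIV_isCont by blast

lemma Mconf_at_0 [simp]: "Mconf c 0 = 1"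
  unfolding Mconf_eq_power_series using powser_zero[of "Mconf_coeff c"]
  by (simp add: Mconf_coeff_def)

lemma Mconf_0_eq_exp: "Mconf 0 = exp"
proof
  fix z
  have "pochhammer (complex_of_real 0 + 1) n = of_real (fact n)" for n
    by (metis add_0 of_real_0 of_real_fact pochhammer_fact)
  then show "Mconf 0 z = exp z"
    unfolding Mconf_def exp_def by (simp add: scaleR_conv_of_real divide_inverse mult.commute)
qed

text \<open>Kummer's equation \<open>z M'' + (c + 1 - z) M' - M = 0\<close> for \<open>M(1, c + 1; z)\<close>, integrated once.\<close>

lemma Mconf_ode:
  assumes "c \<ge> 0"
  shows "z * Mconf' c z + of_real c * (Mconf c z - 1) = z * Mconf c z"
proof -
  let ?a = "Mconf_coeff c"
  have S: "(\<lambda>n. ?a n * z ^ n) sums Mconf c z"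
    unfolding Mconf_eq_power_series using summable_Mconf[OF assms] by (rule summable_sums)
  have s0: "(\<lambda>n. ?a n * z ^ Suc n) sums (z * Mconf c z)"
    using sums_mult[OF S, of z] by (simp add: algebra_simps)
  have "(\<lambda>n. ?a (Suc n) * z ^ Suc n) sums (Mconf c z - 1)"
    using S sums_Suc_iff[of "\<lambda>n. ?a n * z ^ n" "Mconf c z - 1"] by (simp add: Mconf_coeff_def)
  from sums_mult[OF this, of "of_real c"]
  have s1: "(\<lambda>n. of_real c * (?a (Suc n) * z ^ Suc n)) sums (of_real c * (Mconf c z - 1))" .
  have "(\<lambda>n. diffs ?a n * z ^ n) sums Mconf' c z"
    unfolding Mconf'_def using termdiff_converges_all summable_Mconf[OF assms]
    by (blast intro: summable_sums)
  from sums_mult[OF this, of z]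
  have s2: "(\<lambda>n. of_nat (Suc n) * ?a (Suc n) * z ^ Suc n) sums (z * Mconf' c z)"
    by (simp add: diffs_def algebra_simps)
  have "(\<lambda>n. of_nat (Suc n) * ?a (Suc n) * z ^ Suc n + of_real c * (?a (Suc n) * z ^ Suc n))
      = (\<lambda>n. ?a n * z ^ Suc n)"
  proof
    fix n
    show "of_nat (Suc n) * ?a (Suc n) * z ^ Suc n + of_real c * (?a (Suc n) * z ^ Suc n) = ?a n * z ^ Suc n"
      unfolding Mconf_coeff_Suc[OF assms, of n, symmetric] by (simp add: algebra_simps)
  qed
  with sums_add[OF s2 s1] s0 show ?thesis by (metis sums_unique2)
qed

lemma has_vector_derivative_Mconf_line:
  assumes "c \<ge> 0"
  shows "((\<lambda>s. Mconf c (b + w * of_real s)) has_vector_derivative w * Mconf' c (b + w * of_real s)) (at s)"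
proof -
  have "((\<lambda>s. b + w * of_real s) has_vector_derivative w) (at s)"
    using has_vector_derivative_real_field[of "\<lambda>z. b + w * z" w s UNIV]
    by (auto intro!: derivative_eq_intros)
  from field_vector_diff_chain_at[OF this has_field_derivative_Mconf[OF assms]]
  show ?thesis by (simp add: o_def mult.commute)
qed

section \<open>A first-order ODE with a regular singular point\<close>

lemma has_vector_derivative_integrating_factor:
  fixes \<psi> :: "real \<Rightarrow> complex"
  assumes s: "s > 0" and deriv: "(\<psi> has_vector_derivative \<psi>') (at s)"
  shows "((\<lambda>s. of_real (s powr \<kappa>) * exp (- \<i> * \<mu> * of_real s) * \<psi> s) has_vector_derivative
    of_real (s powr \<kappa>) * exp (- \<i> * \<mu> * of_real s)
      * (\<psi>' + of_real \<kappa> * \<psi> s / of_real s - \<i> * \<mu> * \<psi> s)) (at s)"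
proof -
  define P where "P = complex_of_real (s powr \<kappa>)"
  define E where "E = exp (- \<i> * \<mu> * of_real s)"
  have dP: "((\<lambda>s. complex_of_real (s powr \<kappa>)) has_vector_derivative of_real \<kappa> * P / of_real s) (at s)"
    using s by (auto intro!: derivative_eq_intros simp: P_def powr_diff)
  have "((\<lambda>z. exp (- \<i> * \<mu> * z)) has_field_derivative - \<i> * \<mu> * E) (at (of_real s))"
    unfolding E_def by (auto intro!: derivative_eq_intros)
  then have dE: "((\<lambda>s. exp (- \<i> * \<mu> * of_real s)) has_vector_derivative - \<i> * \<mu> * E) (at s)"
    by (rule has_vector_derivative_real_field)
  have "((\<lambda>s. of_real (s powr \<kappa>) * exp (- \<i> * \<mu> * of_real s) * \<psi> s) has_vector_derivative
      P * E * \<psi>' + (P * (- \<i> * \<mu> * E) + of_real \<kappa> * P / of_real s * E) * \<psi> s) (at s)"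
    unfolding P_def E_def
    by (rule has_vector_derivative_mult[OF has_vector_derivative_mult[OF dP[unfolded P_def] dE[unfolded E_def]] deriv])
  also have "P * E * \<psi>' + (P * (- \<i> * \<mu> * E) + of_real \<kappa> * P / of_real s * E) * \<psi> s
      = P * E * (\<psi>' + of_real \<kappa> * \<psi> s / of_real s - \<i> * \<mu> * \<psi> s)"
    by (simp add: field_simps)
  finally show ?thesis
    by (simp add: P_def E_def)
qed

lemma norm_integrating_factor_le:
  assumes "\<kappa> \<ge> 0" "0 < s" "s < 1"
  shows "norm (of_real (s powr \<kappa>) * exp (- \<i> * \<mu> * of_real s)) \<le> exp (norm \<mu>)"
proof -
  have "norm (exp (- \<i> * \<mu> * of_real s)) \<le> exp (norm \<mu> * s)"
    using norm_exp[of "- \<i> * \<mu> * of_real s"] assms by (simp add: norm_mult)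
  also have "\<dots> \<le> exp (norm \<mu>)"
    using assms by (simp add: mult_right_le_one_le)
  finally have E: "norm (exp (- \<i> * \<mu> * of_real s)) \<le> exp (norm \<mu>)" .
  have "norm (of_real (s powr \<kappa>) * exp (- \<i> * \<mu> * of_real s)) = s powr \<kappa> * norm (exp (- \<i> * \<mu> * of_real s))"
    by (simp add: norm_mult)
  also have "\<dots> \<le> 1 * exp (norm \<mu>)"
    using powr_le1[of \<kappa> s] assms E by (intro mult_mono) auto
  finally show ?thesis
    by simp
qed

text \<open>The integrating factor \<open>s powr \<kappa> * exp (- \<i> \<mu> s)\<close> turns the equation into
  \<open>\<Phi>' = 0\<close> on \<open>(0, \<infinity>)\<close>; since \<open>\<kappa> \<ge> 0\<close> the factor stays bounded at \<open>0\<close>, so \<open>\<Phi>\<close> tends to \<open>0\<close>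
  there and hence vanishes identically.\<close>

lemma singular_ode_vanishes_right:
  fixes \<psi> \<psi>' :: "real \<Rightarrow> complex"
  assumes \<kappa>: "\<kappa> \<ge> 0" and cont: "isCont \<psi> 0" and \<psi>0: "\<psi> 0 = 0"
    and deriv: "\<And>s. s > 0 \<Longrightarrow> (\<psi> has_vector_derivative \<psi>' s) (at s)"
    and ode: "\<And>s. s > 0 \<Longrightarrow> \<psi>' s + of_real \<kappa> * \<psi> s / of_real s = \<i> * \<mu> * \<psi> s"
    and t: "t > 0"
  shows "\<psi> t = 0"
proof -
  define I where "I s = of_real (s powr \<kappa>) * exp (- \<i> * \<mu> * of_real s)" for s
  have "((\<lambda>s. I s * \<psi> s) has_vector_derivative 0) (at s within {0<..})" if "s \<in> {0<..}" for s
    using has_vector_derivative_integrating_factor[OF _ deriv, of s \<kappa> \<mu>] ode[of s] that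
    by (simp add: I_def has_vector_derivative_at_within)
  then obtain C where C: "\<And>s. s \<in> {0<..} \<Longrightarrow> I s * \<psi> s = C"
    using has_vector_derivative_zero_constant[of "{0<..}" "\<lambda>s. I s * \<psi> s"] by auto
  have "((\<lambda>s. I s * \<psi> s) \<longlongrightarrow> C) (at_right 0)"
    by (rule Lim_transform_eventually[OF tendsto_const])
      (use C eventually_at_right_less[of 0] in \<open>auto simp: eventually_at_filter\<close>)
  moreover have "((\<lambda>s. I s * \<psi> s) \<longlongrightarrow> 0) (at_right 0)"
  proof (rule Lim_null_comparison)
    have "norm (I s * \<psi> s) \<le> exp (norm \<mu>) * norm (\<psi> s)" if "0 < s" "s < 1" for s
      using norm_integrating_factor_le[OF \<kappa> that, of \<mu>]
      by (simp add: I_def norm_mult mult_right_mono)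
    then show "\<forall>\<^sub>F s in at_right 0. norm (I s * \<psi> s) \<le> exp (norm \<mu>) * norm (\<psi> s)"
      using eventually_at_right_real[of 0 1] by (auto elim: eventually_mono)
    have "(\<psi> \<longlongrightarrow> 0) (at_right 0)"
      using cont \<psi>0 by (simp add: isCont_def filterlim_at_split)
    from tendsto_mult_right_zero[OF tendsto_norm_zero[OF this]]
    show "((\<lambda>s. exp (norm \<mu>) * norm (\<psi> s)) \<longlongrightarrow> 0) (at_right 0)"
      by simp
  qed
  ultimately have "C = 0"
    by (rule tendsto_unique[rotated]) simp
  then show ?thesis
    using C[of t] t by (simp add: I_def)
qed

lemma singular_ode_vanishes:
  fixes \<psi> \<psi>' :: "real \<Rightarrow> complex"
  assumes \<kappa>: "\<kappa> \<ge> 0" and cont: "isCont \<psi> 0" and \<psi>0: "\<psi> 0 = 0"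
    and deriv: "\<And>s. s \<noteq> 0 \<Longrightarrow> (\<psi> has_vector_derivative \<psi>' s) (at s)"
    and ode: "\<And>s. s \<noteq> 0 \<Longrightarrow> \<psi>' s + of_real \<kappa> * \<psi> s / of_real s = \<i> * \<mu> * \<psi> s"
  shows "\<psi> t = 0"
proof -
  consider "t = 0" | "t > 0" | "t < 0" by linarith
  then show ?thesis
  proof cases
    case 2
    then show ?thesis
      using deriv ode by (intro singular_ode_vanishes_right[OF \<kappa> cont \<psi>0, where \<psi>' = \<psi>' and \<mu> = \<mu>]) auto
  next
    case 3
    have "\<psi> (- (- t)) = 0"
    proof (rule singular_ode_vanishes_right[OF \<kappa>, where \<psi> = "\<lambda>s. \<psi> (- s)" and \<psi>' = "\<lambda>s. - \<psi>' (- s)"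
          and \<mu> = "- \<mu>"])
      show "isCont (\<lambda>s. \<psi> (- s)) 0"
        using continuous_at_compose[of 0 uminus \<psi>] cont by (simp add: o_def)
      show "((\<lambda>s. \<psi> (- s)) has_vector_derivative - \<psi>' (- s)) (at s)" if "s > 0" for s
      proof -
        have "((\<lambda>s. - s) has_vector_derivative -1) (at s)"
          by (rule has_vector_derivative_minus[OF has_vector_derivative_id])
        from vector_diff_chain_at[OF this, of \<psi> "\<psi>' (- s)"] show ?thesis
          using deriv[of "- s"] that by (simp add: o_def)
      qed
      show "- \<psi>' (- s) + of_real \<kappa> * \<psi> (- s) / of_real s = \<i> * - \<mu> * \<psi> (- s)" if "s > 0" for s
        using ode[of "- s"] that by (simp add: algebra_simps)
    qed (use 3 \<psi>0 in simp_all)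
    then show ?thesis by simp
  qed (simp add: \<psi>0)
qed

lemma singular_ode_unique:
  fixes \<phi> \<phi>' :: "real \<Rightarrow> complex"
  assumes \<kappa>: "\<kappa> \<ge> 0" and cont: "isCont \<phi> 0"
    and deriv: "\<And>t. t \<noteq> 0 \<Longrightarrow> (\<phi> has_vector_derivative \<phi>' t) (at t)"
    and ode: "\<And>t. t \<noteq> 0 \<Longrightarrow> \<phi>' t + of_real \<kappa> * (\<phi> t - \<phi> 0) / of_real t = \<i> * \<mu> * \<phi> t"
  shows "\<phi> t = \<phi> 0 * Mconf \<kappa> (\<i> * \<mu> * of_real t)"
proof -
  define G where "G s = Mconf \<kappa> (\<i> * \<mu> * of_real s)" for s
  define G' where "G' s = \<i> * \<mu> * Mconf' \<kappa> (\<i> * \<mu> * of_real s)" for s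
  have G_ode: "G' s + of_real \<kappa> * (G s - 1) / of_real s = \<i> * \<mu> * G s" if "s \<noteq> 0" for s
    using Mconf_ode[OF \<kappa>, of "\<i> * \<mu> * of_real s"] that
    by (simp add: G_def G'_def field_simps)
  have "\<phi> t - \<phi> 0 * G t = 0"
  proof (rule singular_ode_vanishes[OF \<kappa>, where \<psi>' = "\<lambda>s. \<phi>' s - \<phi> 0 * G' s" and \<mu> = \<mu>])
    show "isCont (\<lambda>s. \<phi> s - \<phi> 0 * G s) 0"
      unfolding G_def using cont
      by (intro continuous_intros continuous_at_compose[OF _ isCont_Mconf[OF \<kappa>], unfolded o_def])
    show "((\<lambda>s. \<phi> s - \<phi> 0 * G s) has_vector_derivative \<phi>' s - \<phi> 0 * G' s) (at s)" if "s \<noteq> 0" for s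
      unfolding G_def G'_def using deriv[OF that] has_vector_derivative_Mconf_line[OF \<kappa>, of 0, simplified]
      by (auto intro!: derivative_eq_intros)
    show "\<phi>' s - \<phi> 0 * G' s + of_real \<kappa> * (\<phi> s - \<phi> 0 * G s) / of_real s = \<i> * \<mu> * (\<phi> s - \<phi> 0 * G s)"
      if "s \<noteq> 0" for s
    proof -
      have "\<phi>' s - \<phi> 0 * G' s + of_real \<kappa> * (\<phi> s - \<phi> 0 * G s) / of_real s
          = (\<phi>' s + of_real \<kappa> * (\<phi> s - \<phi> 0) / of_real s)
            - \<phi> 0 * (G' s + of_real \<kappa> * (G s - 1) / of_real s)"
        by (simp add: diff_divide_distrib algebra_simps)
      then show ?thesis
        unfolding ode[OF that] G_ode[OF that] by (simp add: algebra_simps)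
    qed
  qed (simp add: G_def)
  then show ?thesis by (simp add: G_def)
qed

section \<open>Directional derivatives and eigenfunctions along a line\<close>

lemma dirderiv_0: "dirderiv f 0 x = 0"
  by (simp add: dirderiv_def)

lemma dirderiv_has_derivative:
  assumes "(f has_derivative D) (at x)"
  shows "dirderiv f \<xi> x = D \<xi>"
proof -
  have "((\<lambda>t. x + t *\<^sub>R \<xi>) has_derivative (\<lambda>t. t *\<^sub>R \<xi>)) (at 0)"
    by (auto intro!: derivative_eq_intros)
  moreover have "(f has_derivative D) (at (x + 0 *\<^sub>R \<xi>))"
    using assms by simp
  ultimately have "((\<lambda>t. f (x + t *\<^sub>R \<xi>)) has_derivative (\<lambda>t. D (t *\<^sub>R \<xi>))) (at 0)"
    by (rule has_derivative_compose)
  moreover have "D (t *\<^sub>R \<xi>) = t *\<^sub>R D \<xi>" for t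
    using has_derivative_linear[OF assms] by (simp add: linear_scale)
  ultimately have "((\<lambda>t. f (x + t *\<^sub>R \<xi>)) has_vector_derivative D \<xi>) (at 0)"
    by (simp add: has_vector_derivative_def)
  then show ?thesis
    unfolding dirderiv_def by (rule vector_derivative_at)
qed

lemma differentiable_prod:
  fixes f :: "'i \<Rightarrow> 'a::real_normed_vector \<Rightarrow> 'b::real_normed_field"
  assumes "finite I" "\<And>i. i \<in> I \<Longrightarrow> f i differentiable (at x)"
  shows "(\<lambda>x. \<Prod>i\<in>I. f i x) differentiable (at x)"
  using assms
proof (induction I rule: finite_induct)
  case (insert i I)
  then have "(\<lambda>x. f i x * (\<Prod>i\<in>I. f i x)) differentiable (at x)"
    by (intro differentiable_mult) simp_all
  with insert.hyps show ?case
    by simp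
qed simp

lemma differentiable_linear_form: "(\<lambda>y::real ^ 'n::finite. w * complex_of_real (inner y a)) differentiable (at x)"
proof (rule bounded_linear_imp_differentiable)
  have "linear (\<lambda>y::real ^ 'n. w * complex_of_real (inner y a))"
    by (rule linearI) (simp_all add: inner_add_left distrib_left scaleR_conv_of_real[where 'a=complex] mult_ac)
  then show "bounded_linear (\<lambda>y::real ^ 'n. w * complex_of_real (inner y a))"
    by (simp add: linear_conv_bounded_linear)
qed

text \<open>Restricted to a line parallel to \<open>a\<close>, the equation is the singular ODE of
  \<open>singular_ode_unique\<close> in the coordinate \<open>t = \<langle>x, a\<rangle> / \<langle>a, a\<rangle>\<close>.\<close>

lemma line_factorization_on:
  fixes f :: "real ^ 'n::finite \<Rightarrow> complex" and a :: "real ^ 'n"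
  assumes cont: "\<And>x. isCont f x"
    and deriv: "\<And>x t. ((\<lambda>s. f (x + s *\<^sub>R a)) has_vector_derivative dirderiv f a (x + t *\<^sub>R a)) (at t)"
    and \<kappa>: "\<kappa> \<ge> 0" and a: "a \<noteq> 0" and x: "x \<in> W"
    and W_line: "\<And>x t. x \<in> W \<Longrightarrow> t \<noteq> 0 \<Longrightarrow> x + (t - inner x a / inner a a) *\<^sub>R a \<in> W"
    and ode: "\<And>z. z \<in> W \<Longrightarrow> dirderiv f a z
      + of_real \<kappa> * (f z - f (z - (inner z a / inner a a) *\<^sub>R a)) / of_real (inner z a / inner a a)
      = \<i> * \<mu> * f z"
  shows "f x = f (x - (inner x a / inner a a) *\<^sub>R a) * Mconf \<kappa> (\<i> * \<mu> * of_real (inner x a / inner a a))"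
proof -
  define q where "q = inner a a"
  have q: "q \<noteq> 0" using a by (simp add: q_def)
  define y where "y = x - (inner x a / q) *\<^sub>R a"
  have inner_line: "inner (y + t *\<^sub>R a) a / q = t" for t
    using q by (simp add: y_def inner_diff_left inner_add_left field_simps flip: q_def)
  have line: "y + t *\<^sub>R a = x + (t - inner x a / q) *\<^sub>R a" for t
    by (simp add: y_def algebra_simps)
  define \<phi> where "\<phi> t = f (y + t *\<^sub>R a)" for t
  have "\<phi> t = \<phi> 0 * Mconf \<kappa> (\<i> * \<mu> * of_real t)" for t
  proof (rule singular_ode_unique[OF \<kappa>])
    show "isCont \<phi> 0"
      unfolding \<phi>_def by (rule continuous_at_compose[OF _ cont, unfolded o_def]) (intro continuous_intros)
    show "(\<phi> has_vector_derivative dirderiv f a (y + s *\<^sub>R a)) (at s)" for s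
      unfolding \<phi>_def by (rule deriv)
    show "dirderiv f a (y + s *\<^sub>R a) + of_real \<kappa> * (\<phi> s - \<phi> 0) / of_real s = \<i> * \<mu> * \<phi> s"
      if "s \<noteq> 0" for s
    proof -
      have "y + s *\<^sub>R a \<in> W"
        unfolding line using W_line[OF x that] by (simp add: q_def)
      from ode[OF this] show ?thesis
        using inner_line[of s] by (simp add: \<phi>_def q_def[symmetric])
    qed
  qed
  from this[of "inner x a / q"] show ?thesis
    by (simp add: \<phi>_def y_def q_def)
qed

lemma line_factorization:
  fixes f :: "real ^ 'n::finite \<Rightarrow> complex" and a :: "real ^ 'n"
  assumes cont: "\<And>x. isCont f x"
    and deriv: "\<And>x t. ((\<lambda>s. f (x + s *\<^sub>R a)) has_vector_derivative dirderiv f a (x + t *\<^sub>R a)) (at t)"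
    and \<kappa>: "\<kappa> \<ge> 0" and a: "a \<noteq> 0" and dense: "closure W = UNIV"
    and W_line: "\<And>x t. x \<in> W \<Longrightarrow> t \<noteq> 0 \<Longrightarrow> x + (t - inner x a / inner a a) *\<^sub>R a \<in> W"
    and ode: "\<And>z. z \<in> W \<Longrightarrow> dirderiv f a z
      + of_real \<kappa> * (f z - f (z - (inner z a / inner a a) *\<^sub>R a)) / of_real (inner z a / inner a a)
      = \<i> * \<mu> * f z"
  shows "f x = f (x - (inner x a / inner a a) *\<^sub>R a) * Mconf \<kappa> (\<i> * \<mu> * of_real (inner x a / inner a a))"
proof -
  define g where "g x = f x - f (x - (inner x a / inner a a) *\<^sub>R a) * Mconf \<kappa> (\<i> * \<mu> * of_real (inner x a / inner a a))"
    for x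
  have "g x = 0" if "x \<in> W" for x
    using line_factorization_on[OF cont deriv \<kappa> a that W_line ode] by (simp add: g_def)
  moreover have "isCont g x" for x
  proof -
    have "isCont (\<lambda>x. f (x - (inner x a / inner a a) *\<^sub>R a)) x"
      by (rule continuous_at_compose[OF _ cont, unfolded o_def]) (use a in \<open>auto intro!: continuous_intros\<close>)
    moreover have "isCont (\<lambda>x. Mconf \<kappa> (\<i> * \<mu> * of_real (inner x a / inner a a))) x"
      by (rule continuous_at_compose[OF _ isCont_Mconf[OF \<kappa>], unfolded o_def])
        (use a in \<open>auto intro!: continuous_intros\<close>)
    ultimately show ?thesis
      unfolding g_def using cont by (intro continuous_intros)
  qed
  then have "continuous_on (closure W) g"
    by (simp add: continuous_at_imp_continuous_on)
  ultimately have "g x = 0"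
    using dense by (metis continuous_constant_on_closure UNIV_I)
  then show ?thesis
    by (simp add: g_def)
qed

lemma Mconf_line_eigen:
  fixes M :: "real ^ 'n::finite \<Rightarrow> complex"
  assumes line: "\<And>s. M (x + s *\<^sub>R a) = K * Mconf \<kappa> (c * of_real (inner x a + 2 * s))"
    and \<kappa>: "\<kappa> \<ge> 0" and u: "inner x a \<noteq> 0" and aa: "inner a a = 2"
  shows "dirderiv M a x + of_real (2 * \<kappa>) * diffquot M a x = 2 * c * M x"
proof -
  define u where "u = inner x a"
  define F where "F = Mconf \<kappa> (c * of_real u)"
  define F' where "F' = Mconf' \<kappa> (c * of_real u)"
  have "((\<lambda>s. K * Mconf \<kappa> (c * of_real u + 2 * c * of_real s)) has_vector_derivative K * (2 * c * F')) (at 0)"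
    using has_vector_derivative_Mconf_line[OF \<kappa>, of "c * of_real u" "2 * c" 0]
    by (intro has_vector_derivative_mult_right) (simp add: F'_def)
  then have "dirderiv M a x = K * (2 * c * F')"
    unfolding dirderiv_def line u_def[symmetric] by (simp add: vector_derivative_at algebra_simps)
  moreover have "M x = K * F"
    using line[of 0] by (simp add: F_def u_def)
  moreover have "M (tau a x) = K"
    using line[of "- u / 2"] by (simp add: tau_def u_def)
  moreover have "of_real (2 * \<kappa>) * ((K * F - K) / of_real u) = 2 * K * c * (F - F')"
  proof -
    have ode: "of_real \<kappa> * (F - 1) = c * of_real u * (F - F')"
      using Mconf_ode[OF \<kappa>, of "c * of_real u"] by (simp add: F_def F'_def algebra_simps)
    have "of_real (2 * \<kappa>) * ((K * F - K) / of_real u) = 2 * K * (of_real \<kappa> * (F - 1)) / of_real u"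
      by (simp add: algebra_simps)
    also have "\<dots> = 2 * K * c * (F - F') * (of_real u / of_real u)"
      unfolding ode by (simp add: mult_ac)
    also have "\<dots> = 2 * K * c * (F - F')"
      using u by (simp add: u_def)
    finally show ?thesis .
  qed
  ultimately show ?thesis
    by (simp add: diffquot_def u_def[symmetric] algebra_simps)
qed

section \<open>Real-analytic functions\<close>

definition mdeg :: "('n::finite \<Rightarrow> nat) \<Rightarrow> nat" where
  "mdeg \<alpha> = (\<Sum>i\<in>UNIV. \<alpha> i)"

definition mpow :: "real ^ 'n::finite \<Rightarrow> ('n \<Rightarrow> nat) \<Rightarrow> real" where
  "mpow w \<alpha> = (\<Prod>i\<in>UNIV. (w $ i) ^ \<alpha> i)"

lemma real_analytic_on_mpow:
  "real_analytic_on f S \<longleftrightarrow> (\<forall>a\<in>S. \<exists>r>0. \<exists>c. \<forall>x. dist x a < r \<longrightarrow>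
      ((\<lambda>\<alpha>. c \<alpha> * complex_of_real (mpow (x - a) \<alpha>)) has_sum f x) UNIV)"
  by (simp add: real_analytic_on_def mpow_def)

lemma finite_mdeg_less: "finite {\<alpha> :: 'n::finite \<Rightarrow> nat. mdeg \<alpha> < k}"
proof (rule finite_subset)
  show "{\<alpha> :: 'n \<Rightarrow> nat. mdeg \<alpha> < k} \<subseteq> PiE UNIV (\<lambda>_. {..k})"
  proof
    fix \<alpha> :: "'n \<Rightarrow> nat"
    assume "\<alpha> \<in> {\<alpha>. mdeg \<alpha> < k}"
    then have "\<alpha> i \<le> k" for i
      using member_le_sum[of i UNIV \<alpha>] by (simp add: mdeg_def)
    then show "\<alpha> \<in> PiE UNIV (\<lambda>_. {..k})"
      by (simp add: PiE_UNIV_domain)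
  qed
qed (rule finite_PiE; simp)

lemma mdeg_eq_0_iff: "mdeg (\<alpha> :: 'n::finite \<Rightarrow> nat) = 0 \<longleftrightarrow> \<alpha> = (\<lambda>_. 0)"
  by (auto simp: mdeg_def fun_eq_iff)

lemma mdeg_0 [simp]: "mdeg (\<lambda>_. 0) = 0"
  by (simp add: mdeg_def)

lemma mpow_0 [simp]: "mpow w (\<lambda>_. 0) = 1"
  by (simp add: mpow_def)

lemma mpow_const: "mpow (\<chi> i. r) \<alpha> = r ^ mdeg \<alpha>"
  by (simp add: mpow_def mdeg_def power_sum)

lemma mpow_scaleR: "mpow (t *\<^sub>R w) \<alpha> = t ^ mdeg \<alpha> * mpow w \<alpha>"
  by (simp add: mpow_def mdeg_def power_sum power_mult_distrib prod.distrib)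

lemma mpow_add: "mpow w (\<lambda>i. \<alpha> i + \<beta> i) = mpow w \<alpha> * mpow w \<beta>"
  by (simp add: mpow_def power_add prod.distrib)

lemma abs_mpow_le:
  assumes "\<And>i. \<bar>w $ i\<bar> \<le> \<epsilon>"
  shows "\<bar>mpow w \<alpha>\<bar> \<le> \<epsilon> ^ mdeg \<alpha>"
proof -
  have "\<bar>mpow w \<alpha>\<bar> = (\<Prod>i\<in>UNIV. \<bar>w $ i\<bar> ^ \<alpha> i)"
    by (simp add: mpow_def abs_prod power_abs)
  also have "\<dots> \<le> (\<Prod>i\<in>UNIV. \<epsilon> ^ \<alpha> i)"
    using assms by (intro prod_mono) (auto intro: power_mono)
  finally show ?thesis by (simp add: mdeg_def power_sum)
qed

lemma mpow_series_tail_bound: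
  fixes c :: "('n::finite \<Rightarrow> nat) \<Rightarrow> complex"
  assumes \<rho>: "\<rho> > 0" and F: "((\<lambda>\<alpha>. c \<alpha> * complex_of_real (mpow w \<alpha>)) has_sum F) UNIV"
    and B: "((\<lambda>\<alpha>. norm (c \<alpha>) * \<rho> ^ mdeg \<alpha>) has_sum B) UNIV"
    and w: "\<And>i. \<bar>w $ i\<bar> \<le> \<epsilon>" and \<epsilon>: "0 \<le> \<epsilon>" "\<epsilon> \<le> \<rho>"
  shows "norm (F - (\<Sum>\<alpha> | mdeg \<alpha> < m. c \<alpha> * complex_of_real (mpow w \<alpha>))) \<le> (\<epsilon> / \<rho>) ^ m * B"
proof -
  let ?Y = "\<lambda>\<alpha>. c \<alpha> * complex_of_real (mpow w \<alpha>)"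
  let ?A = "{\<alpha>. mdeg \<alpha> < m}"
  have "((\<lambda>\<alpha>. if \<alpha> \<in> ?A then ?Y \<alpha> else 0) has_sum (\<Sum>\<alpha>\<in>?A. ?Y \<alpha>)) UNIV"
    by (rule has_sum_finite_neutralI[OF finite_mdeg_less]) auto
  then have "((\<lambda>\<alpha>. - (if \<alpha> \<in> ?A then ?Y \<alpha> else 0)) has_sum - (\<Sum>\<alpha>\<in>?A. ?Y \<alpha>)) UNIV"
    by (simp add: has_sum_uminus)
  from has_sum_add[OF F this]
  have tail: "((\<lambda>\<alpha>. if \<alpha> \<in> ?A then 0 else ?Y \<alpha>) has_sum (F - (\<Sum>\<alpha>\<in>?A. ?Y \<alpha>))) UNIV"
    by (simp add: if_distrib if_distribR cong: if_cong)
  show ?thesis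
  proof (rule norm_infsum_le[OF tail has_sum_cmult_right[OF B]])
    fix \<alpha> :: "'n \<Rightarrow> nat"
    show "norm (if \<alpha> \<in> ?A then 0 else ?Y \<alpha>) \<le> (\<epsilon> / \<rho>) ^ m * (norm (c \<alpha>) * \<rho> ^ mdeg \<alpha>)"
    proof (cases "\<alpha> \<in> ?A")
      case False
      have "norm (?Y \<alpha>) \<le> norm (c \<alpha>) * \<epsilon> ^ mdeg \<alpha>"
        using abs_mpow_le[OF w] by (simp add: norm_mult mult_left_mono)
      also have "\<epsilon> ^ mdeg \<alpha> = (\<epsilon> / \<rho>) ^ mdeg \<alpha> * \<rho> ^ mdeg \<alpha>"
        using \<rho> by (simp add: power_divide)
      also have "(\<epsilon> / \<rho>) ^ mdeg \<alpha> \<le> (\<epsilon> / \<rho>) ^ m"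
        using False \<epsilon> \<rho> by (intro power_decreasing) auto
      finally show ?thesis
        using False \<rho> by (simp add: mult_left_mono mult_right_mono mult_ac)
    qed (use \<rho> \<epsilon> in simp)
  qed
qed

lemma real_analytic_on_local_bound:
  fixes f :: "real ^ 'n::finite \<Rightarrow> complex"
  assumes "real_analytic_on f S" "a \<in> S"
  obtains \<rho> c B where "\<rho> > 0"
    and "\<And>w \<epsilon> m. (\<And>i. \<bar>w $ i\<bar> \<le> \<epsilon>) \<Longrightarrow> 0 \<le> \<epsilon> \<Longrightarrow> \<epsilon> \<le> \<rho> \<Longrightarrow>
      norm (f (a + w) - (\<Sum>\<alpha> | mdeg \<alpha> < m. c \<alpha> * complex_of_real (mpow w \<alpha>))) \<le> (\<epsilon> / \<rho>) ^ m * B"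
proof -
  obtain r c where r: "r > 0" and c: "\<And>x. dist x a < r \<Longrightarrow>
      ((\<lambda>\<alpha>. c \<alpha> * complex_of_real (mpow (x - a) \<alpha>)) has_sum f x) UNIV"
    using assms unfolding real_analytic_on_mpow by blast
  define \<rho> where "\<rho> = r / (2 * real CARD('n))"
  have \<rho>: "\<rho> > 0" unfolding \<rho>_def using r by (simp add: finite_UNIV_card_ge_0)
  have rep: "((\<lambda>\<alpha>. c \<alpha> * complex_of_real (mpow w \<alpha>)) has_sum f (a + w)) UNIV"
    if "\<And>i. \<bar>w $ i\<bar> \<le> \<rho>" for w
  proof -
    have "norm w \<le> (\<Sum>i\<in>UNIV. \<bar>w $ i\<bar>)" by (rule norm_le_l1_cart)
    also have "\<dots> \<le> (\<Sum>i\<in>(UNIV::'n set). \<rho>)" using that by (intro sum_mono)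
    also have "\<dots> < r" using r by (simp add: \<rho>_def)
    finally show ?thesis using c[of "a + w"] by (simp add: dist_norm)
  qed
  have "(\<lambda>\<alpha>. c \<alpha> * complex_of_real (mpow (\<chi> i. \<rho>) \<alpha>)) summable_on UNIV"
    using rep[of "\<chi> i. \<rho>"] \<rho> by (auto simp: summable_on_def)
  then have "(\<lambda>\<alpha>. norm (c \<alpha> * complex_of_real (mpow (\<chi> i. \<rho>) \<alpha>))) summable_on UNIV"
    by (simp add: summable_on_iff_abs_summable_on_complex)
  then obtain B where "((\<lambda>\<alpha>. norm (c \<alpha>) * \<rho> ^ mdeg \<alpha>) has_sum B) UNIV"
    using \<rho> by (auto simp: summable_on_def mpow_const norm_mult norm_power)
  from mpow_series_tail_bound[OF \<rho> rep this] that[OF \<rho>] show ?thesis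
    by (meson order_trans)
qed

lemma isCont_real_analytic:
  fixes f :: "real ^ 'n::finite \<Rightarrow> complex"
  assumes "real_analytic_on f S" "a \<in> S"
  shows "isCont f a"
proof -
  obtain \<rho> c B where \<rho>: "\<rho> > 0" and est: "\<And>w \<epsilon> m. (\<And>i. \<bar>w $ i\<bar> \<le> \<epsilon>) \<Longrightarrow> 0 \<le> \<epsilon> \<Longrightarrow> \<epsilon> \<le> \<rho> \<Longrightarrow>
      norm (f (a + w) - (\<Sum>\<alpha> | mdeg \<alpha> < m. c \<alpha> * complex_of_real (mpow w \<alpha>))) \<le> (\<epsilon> / \<rho>) ^ m * B"
    using real_analytic_on_local_bound[OF assms] by blast
  have est1: "norm (f (a + h) - c (\<lambda>_. 0)) \<le> norm h / \<rho> * B" if "norm h \<le> \<rho>" for h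
    using est[of h "norm h" 1] that component_le_norm_cart[of h] by (simp add: mdeg_eq_0_iff)
  have "norm (f (a + 0) - c (\<lambda>_. 0)) \<le> norm (0 :: real ^ 'n) / \<rho> * B"
    using \<rho> by (intro est1) simp
  then have fa: "f a = c (\<lambda>_. 0)"
    by simp
  have "((\<lambda>h. f (a + h) - f a) \<longlongrightarrow> 0) (at 0)"
  proof (rule Lim_null_comparison)
    show "\<forall>\<^sub>F h in at 0. norm (f (a + h) - f a) \<le> norm h / \<rho> * B"
      using \<rho> est1 unfolding fa eventually_at by (auto intro!: exI[of _ \<rho>])
    show "((\<lambda>h. norm h / \<rho> * B) \<longlongrightarrow> 0) (at 0)"
      using \<rho> by (intro tendsto_eq_intros) auto
  qed
  then show ?thesis
    by (simp add: isCont_def LIM_offset_zero_iff LIM_zero_iff)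
qed

lemma has_vector_derivative_quadratic_remainder:
  fixes g :: "real \<Rightarrow> 'a::real_normed_vector"
  assumes \<delta>: "\<delta> > 0" and rem: "\<And>h. \<bar>h\<bar> < \<delta> \<Longrightarrow> norm (g h - g 0 - h *\<^sub>R L) \<le> C * h\<^sup>2"
  shows "(g has_vector_derivative L) (at 0)"
proof -
  have "((\<lambda>h. norm (g (0 + h) - g 0 - h *\<^sub>R L) / norm h) \<longlongrightarrow> 0) (at 0)"
  proof (rule Lim_null_comparison)
    show "\<forall>\<^sub>F h in at 0. norm (norm (g (0 + h) - g 0 - h *\<^sub>R L) / norm h) \<le> C * \<bar>h\<bar>"
      unfolding eventually_at
    proof (intro exI[of _ \<delta>] conjI ballI impI \<delta>)
      fix h :: real
      assume "h \<noteq> 0 \<and> dist h 0 < \<delta>"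
      then show "norm (norm (g (0 + h) - g 0 - h *\<^sub>R L) / norm h) \<le> C * \<bar>h\<bar>"
        using rem[of h] by (simp add: pos_divide_le_eq power2_eq_square abs_mult_self_eq mult.assoc)
    qed
    show "((\<lambda>h. C * \<bar>h\<bar>) \<longlongrightarrow> 0) (at 0)"
      by (intro tendsto_eq_intros) auto
  qed
  then show ?thesis
    unfolding has_vector_derivative_def has_derivative_at by (simp add: bounded_linear_scaleR_left)
qed

lemma real_analytic_on_line_differentiable:
  fixes f :: "real ^ 'n::finite \<Rightarrow> complex"
  assumes "real_analytic_on f S" "a \<in> S"
  shows "\<exists>D. ((\<lambda>t. f (a + t *\<^sub>R v)) has_vector_derivative D) (at 0)"
proof -
  obtain \<rho> c B where \<rho>: "\<rho> > 0" and est: "\<And>w \<epsilon> m. (\<And>i. \<bar>w $ i\<bar> \<le> \<epsilon>) \<Longrightarrow> 0 \<le> \<epsilon> \<Longrightarrow> \<epsilon> \<le> \<rho> \<Longrightarrow>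
      norm (f (a + w) - (\<Sum>\<alpha> | mdeg \<alpha> < m. c \<alpha> * complex_of_real (mpow w \<alpha>))) \<le> (\<epsilon> / \<rho>) ^ m * B"
    using real_analytic_on_local_bound[OF assms] by blast
  define L where "L = (\<Sum>\<alpha> | mdeg \<alpha> = 1. c \<alpha> * complex_of_real (mpow v \<alpha>))"
  have fa: "f a = c (\<lambda>_. 0)"
    using est[of 0 0 1] \<rho> by (simp add: mdeg_eq_0_iff)
  have taylor: "(\<Sum>\<alpha> | mdeg \<alpha> < 2. c \<alpha> * complex_of_real (mpow (h *\<^sub>R v) \<alpha>)) = f a + h *\<^sub>R L" for h
  proof -
    have "{\<alpha> :: 'n \<Rightarrow> nat. mdeg \<alpha> < 2} = insert (\<lambda>_. 0) {\<alpha>. mdeg \<alpha> = 1}"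
      unfolding less_2_cases_iff by (auto simp: mdeg_eq_0_iff)
    moreover have "finite {\<alpha> :: 'n \<Rightarrow> nat. mdeg \<alpha> = 1}"
      using finite_mdeg_less[of 2] by (rule finite_subset[rotated]) auto
    moreover have "(\<lambda>_. 0) \<notin> {\<alpha> :: 'n \<Rightarrow> nat. mdeg \<alpha> = 1}"
      by (simp add: mdeg_def)
    ultimately show ?thesis
      by (simp add: fa L_def mpow_scaleR sum_distrib_left scaleR_conv_of_real[where 'a=complex] mult_ac)
  qed
  have rem: "norm (f (a + h *\<^sub>R v) - f (a + 0 *\<^sub>R v) - h *\<^sub>R L) \<le> ((norm v / \<rho>)\<^sup>2 * B) * h\<^sup>2"
    if "\<bar>h\<bar> < \<rho> / (norm v + 1)" for h
  proof -
    have "\<bar>h\<bar> * (norm v + 1) < \<rho>"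
      using that by (simp add: pos_less_divide_eq add_nonneg_pos)
    then have hv: "\<bar>h\<bar> * norm v \<le> \<rho>"
      unfolding distrib_left using abs_ge_zero[of h] by linarith
    have "norm (f (a + h *\<^sub>R v) - (\<Sum>\<alpha> | mdeg \<alpha> < 2. c \<alpha> * complex_of_real (mpow (h *\<^sub>R v) \<alpha>)))
        \<le> (\<bar>h\<bar> * norm v / \<rho>)\<^sup>2 * B"
    proof (rule est)
      show "\<bar>(h *\<^sub>R v) $ i\<bar> \<le> \<bar>h\<bar> * norm v" for i
        using component_le_norm_cart[of v i] by (simp add: abs_mult mult_left_mono)
    qed (use hv in simp_all)
    then show ?thesis
      by (simp add: taylor diff_diff_eq power_mult_distrib power_divide mult_ac)
  qed
  have "((\<lambda>h. f (a + h *\<^sub>R v)) has_vector_derivative L) (at 0)"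
    by (rule has_vector_derivative_quadratic_remainder
        [where g = "\<lambda>h. f (a + h *\<^sub>R v)" and \<delta> = "\<rho> / (norm v + 1)", OF _ rem])
      (use \<rho> in \<open>simp add: add_nonneg_pos\<close>)
  then show ?thesis
    by blast
qed

lemma real_analytic_has_vector_derivative_line:
  fixes f :: "real ^ 'n::finite \<Rightarrow> complex"
  assumes "real_analytic_on f UNIV"
  shows "((\<lambda>s. f (x + s *\<^sub>R v)) has_vector_derivative dirderiv f v (x + t *\<^sub>R v)) (at t)"
proof -
  obtain D where D: "((\<lambda>s. f ((x + t *\<^sub>R v) + s *\<^sub>R v)) has_vector_derivative D) (at 0)"
    using real_analytic_on_line_differentiable[OF assms] by blast
  have "((\<lambda>s. s - t) has_vector_derivative 1) (at t)"
    by (auto intro!: derivative_eq_intros)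
  from vector_diff_chain_at[OF this, of _ D] D
  have "((\<lambda>s. f ((x + t *\<^sub>R v) + (s - t) *\<^sub>R v)) has_vector_derivative D) (at t)"
    by (simp add: o_def)
  moreover have "dirderiv f v (x + t *\<^sub>R v) = D"
    using D unfolding dirderiv_def by (rule vector_derivative_at)
  ultimately show ?thesis
    by (simp add: algebra_simps)
qed

lemma real_analytic_on_const: "real_analytic_on (\<lambda>x. k) S"
  unfolding real_analytic_on_mpow
proof (intro ballI exI[of _ 1] conjI exI[of _ "\<lambda>\<alpha>. if \<alpha> = (\<lambda>_. 0) then k else 0"] allI impI)
  fix x a :: "real ^ 'n"
  show "((\<lambda>\<alpha>. (if \<alpha> = (\<lambda>_. 0) then k else 0) * complex_of_real (mpow (x - a) \<alpha>)) has_sum k) UNIV"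
    by (rule has_sum_finite_neutralI[of "{\<lambda>_. 0}"]) auto
qed simp

lemma has_sum_mult_product:
  fixes f :: "'a \<Rightarrow> complex" and g :: "'b \<Rightarrow> complex"
  assumes f: "(f has_sum F) A" and g: "(g has_sum G) B"
  shows "((\<lambda>(a, b). f a * g b) has_sum (F * G)) (A \<times> B)"
proof -
  obtain NG where NG: "((\<lambda>b. norm (g b)) has_sum NG) B"
    using g summable_on_iff_abs_summable_on_complex by (auto simp: summable_on_def)
  have "(\<lambda>p. norm (f (fst p)) * norm (g (snd p))) summable_on A \<times> B"
  proof (rule summable_on_SigmaI)
    show "((\<lambda>b. norm (f (fst (a, b))) * norm (g (snd (a, b)))) has_sum norm (f a) * NG) B" for a
      using has_sum_cmult_right[OF NG] by simp
    have "f summable_on A"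
      using f by (auto simp: summable_on_def)
    then have "(\<lambda>a. norm (f a)) summable_on A"
      using summable_on_iff_abs_summable_on_complex by blast
    then show "(\<lambda>a. norm (f a) * NG) summable_on A"
      by (rule summable_on_cmult_left)
  qed auto
  then have "(\<lambda>p. f (fst p) * g (snd p)) summable_on A \<times> B"
    by (simp add: abs_summable_summable norm_mult)
  with has_sum_cmult_left[OF f] have "((\<lambda>p. f (fst p) * g (snd p)) has_sum F * G) (A \<times> B)"
    by (rule has_sum_SigmaI[rotated]) (simp add: has_sum_cmult_right[OF g])
  then show ?thesis
    by (simp add: case_prod_unfold)
qed

lemma finite_multiindex_splittings:
  "finite {p :: ('n::finite \<Rightarrow> nat) \<times> ('n \<Rightarrow> nat). (\<lambda>i. fst p i + snd p i) = \<gamma>}"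
proof (rule finite_subset)
  show "{p :: ('n \<Rightarrow> nat) \<times> ('n \<Rightarrow> nat). (\<lambda>i. fst p i + snd p i) = \<gamma>}
      \<subseteq> PiE UNIV (\<lambda>i. {..\<gamma> i}) \<times> PiE UNIV (\<lambda>i. {..\<gamma> i})"
    by (auto simp: PiE_UNIV_domain)
qed (intro finite_cartesian_product finite_PiE; simp)

lemma real_analytic_on_mult:
  fixes f g :: "real ^ 'n::finite \<Rightarrow> complex"
  assumes "real_analytic_on f S" and "real_analytic_on g S"
  shows "real_analytic_on (\<lambda>x. f x * g x) S"
  unfolding real_analytic_on_mpow
proof
  fix a assume "a \<in> S"
  obtain r1 c1 where r1: "r1 > 0" and c1: "\<And>x. dist x a < r1 \<Longrightarrow>
      ((\<lambda>\<alpha>. c1 \<alpha> * complex_of_real (mpow (x - a) \<alpha>)) has_sum f x) UNIV"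
    using assms(1) \<open>a \<in> S\<close> unfolding real_analytic_on_mpow by blast
  obtain r2 c2 where r2: "r2 > 0" and c2: "\<And>x. dist x a < r2 \<Longrightarrow>
      ((\<lambda>\<alpha>. c2 \<alpha> * complex_of_real (mpow (x - a) \<alpha>)) has_sum g x) UNIV"
    using assms(2) \<open>a \<in> S\<close> unfolding real_analytic_on_mpow by blast
  define split where "split \<gamma> = {p :: ('n \<Rightarrow> nat) \<times> ('n \<Rightarrow> nat). (\<lambda>i. fst p i + snd p i) = \<gamma>}" for \<gamma>
  define c where "c \<gamma> = (\<Sum>p\<in>split \<gamma>. c1 (fst p) * c2 (snd p))" for \<gamma>
  show "\<exists>r>0. \<exists>c. \<forall>x. dist x a < r \<longrightarrow>
      ((\<lambda>\<alpha>. c \<alpha> * complex_of_real (mpow (x - a) \<alpha>)) has_sum f x * g x) UNIV"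
  proof (intro exI[of _ "min r1 r2"] conjI exI[of _ c] allI impI)
    show "min r1 r2 > 0" using r1 r2 by simp
    fix x assume x: "dist x a < min r1 r2"
    define Y where "Y \<alpha> = complex_of_real (mpow (x - a) \<alpha>)" for \<alpha>
    define G where "G q = c1 (fst (snd q)) * c2 (snd (snd q)) * Y (fst q)"
      for q :: "('n \<Rightarrow> nat) \<times> ('n \<Rightarrow> nat) \<times> ('n \<Rightarrow> nat)"
    have "((\<lambda>(\<alpha>, \<beta>). (c1 \<alpha> * Y \<alpha>) * (c2 \<beta> * Y \<beta>)) has_sum (f x * g x)) (UNIV \<times> UNIV)"
      using has_sum_mult_product[OF c1 c2] x unfolding Y_def by auto
    also have "?this \<longleftrightarrow> (G has_sum (f x * g x)) (Sigma UNIV split)"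
      by (rule has_sum_reindex_bij_witness[where j = "\<lambda>p. ((\<lambda>i. fst p i + snd p i), p)" and i = snd])
        (auto simp: split_def G_def Y_def mpow_add)
    finally have "((\<lambda>\<gamma>. c \<gamma> * Y \<gamma>) has_sum (f x * g x)) UNIV"
    proof (rule has_sum_SigmaD)
      show "((\<lambda>p. G (\<gamma>, p)) has_sum c \<gamma> * Y \<gamma>) (split \<gamma>)" for \<gamma>
        using finite_multiindex_splittings[of \<gamma>]
        by (intro has_sum_finiteI) (simp_all add: split_def G_def c_def sum_distrib_right)
    qed
    then show "((\<lambda>\<alpha>. c \<alpha> * complex_of_real (mpow (x - a) \<alpha>)) has_sum f x * g x) UNIV"
      unfolding Y_def .
  qed
qed

lemma real_analytic_on_prod:
  fixes f :: "'i \<Rightarrow> real ^ 'n::finite \<Rightarrow> complex"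
  assumes "finite I" and "\<And>i. i \<in> I \<Longrightarrow> real_analytic_on (f i) S"
  shows "real_analytic_on (\<lambda>x. \<Prod>i\<in>I. f i x) S"
  using assms
  by (induction I rule: finite_induct) (simp_all add: real_analytic_on_const real_analytic_on_mult)

lemma has_sum_binomial_expansion:
  fixes h :: "nat \<Rightarrow> complex"
  assumes abs: "summable (\<lambda>k. norm (h k) * (norm u + norm v) ^ k)"
  shows "((\<lambda>(l, m). h (l + m) * (of_nat ((l + m) choose l) * u ^ l * v ^ m)) has_sum (\<Sum>k. h k * (u + v) ^ k))
           UNIV"
proof -
  let ?T = "\<lambda>(k, l). h k * (of_nat (k choose l) * u ^ l * v ^ (k - l))"
  have "(?T has_sum (\<Sum>k. h k * (u + v) ^ k)) (SIGMA k:UNIV. {..k})"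
  proof (rule has_sum_SigmaI)
    show "((\<lambda>l. ?T (k, l)) has_sum h k * (u + v) ^ k) {..k}" for k
      by (rule has_sum_finiteI) (simp_all add: binomial_ring sum_distrib_left)
    have "norm (h k * (u + v) ^ k) \<le> norm (h k) * (norm u + norm v) ^ k" for k
      by (simp add: norm_mult norm_power mult_left_mono power_mono norm_triangle_ineq)
    then have norm_summable: "summable (\<lambda>k. norm (h k * (u + v) ^ k))"
      by (intro summable_comparison_test'[OF abs]) simp
    show "((\<lambda>k. h k * (u + v) ^ k) has_sum (\<Sum>k. h k * (u + v) ^ k)) UNIV"
      using norm_summable_imp_has_sum[OF norm_summable summable_sums[OF summable_norm_cancel[OF norm_summable]]] .
    have "(\<lambda>kl. norm (?T kl)) summable_on (SIGMA k:UNIV. {..k})"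
    proof (rule summable_on_SigmaI)
      show "((\<lambda>l. norm (?T (k, l))) has_sum norm (h k) * (norm u + norm v) ^ k) {..k}" for k
        by (rule has_sum_finiteI)
          (simp_all add: binomial_ring sum_distrib_left norm_mult norm_power mult_ac)
      show "(\<lambda>k. norm (h k) * (norm u + norm v) ^ k) summable_on UNIV"
        using abs by (intro norm_summable_imp_summable_on) simp
    qed auto
    then show "?T summable_on (SIGMA k:UNIV. {..k})"
      by (rule abs_summable_summable)
  qed
  also have "?this \<longleftrightarrow> ?thesis"
    by (rule has_sum_reindex_bij_witness[where j = "\<lambda>(k, l). (l, k - l)" and i = "\<lambda>(l, m). (l + m, l)"]) auto
  finally show ?thesis .
qed

lemma has_sum_reindex_two_coords:
  fixes p q :: 'n
  assumes "p \<noteq> q"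
  shows "(T has_sum S) UNIV \<longleftrightarrow>
    ((\<lambda>\<alpha>. T (\<alpha> p, \<alpha> q)) has_sum S) {\<alpha> :: 'n \<Rightarrow> nat. \<forall>i. i \<noteq> p \<longrightarrow> i \<noteq> q \<longrightarrow> \<alpha> i = 0}"
  using assms
  by (intro has_sum_reindex_bij_witness[where j = "\<lambda>(l, m) i. if i = p then l else if i = q then m else 0"
        and i = "\<lambda>\<alpha>. (\<alpha> p, \<alpha> q)"]) (auto simp: fun_eq_iff)

lemma mpow_two_coords:
  assumes "p \<noteq> q" "\<And>i. i \<noteq> p \<Longrightarrow> i \<noteq> q \<Longrightarrow> \<alpha> i = 0"
  shows "mpow w \<alpha> = (w $ p) ^ \<alpha> p * (w $ q) ^ \<alpha> q"
proof -
  have "mpow w \<alpha> = (\<Prod>i\<in>{p, q}. (w $ i) ^ \<alpha> i)"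
    unfolding mpow_def using assms(2) by (intro prod.mono_neutral_right) auto
  then show ?thesis
    using assms(1) by simp
qed

text \<open>Expand an entire function of \<open>b + w\<^sub>p x\<^sub>p + w\<^sub>q x\<^sub>q\<close> in its Taylor series at the base point
  and each power binomially: the exponent pair \<open>(l, m)\<close> becomes the multi-index supported
  on \<open>{p, q}\<close>.\<close>

lemma real_analytic_on_holomorphic_two_coords:
  fixes g :: "complex \<Rightarrow> complex" and p q :: "'n::finite"
  assumes hol: "g holomorphic_on UNIV" and pq: "p \<noteq> q"
  shows "real_analytic_on (\<lambda>x::real ^ 'n. g (b + wp * of_real (x $ p) + wq * of_real (x $ q))) S"
  unfolding real_analytic_on_mpow
proof (intro ballI)
  fix a :: "real ^ 'n"
  define s0 where "s0 = b + wp * of_real (a $ p) + wq * of_real (a $ q)"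
  define h where "h k = (deriv ^^ k) g s0 / fact k" for k
  define supp where "supp = {\<alpha> :: 'n \<Rightarrow> nat. \<forall>i. i \<noteq> p \<longrightarrow> i \<noteq> q \<longrightarrow> \<alpha> i = 0}"
  define c where "c \<alpha> = (if \<alpha> \<in> supp
      then h (\<alpha> p + \<alpha> q) * of_nat ((\<alpha> p + \<alpha> q) choose \<alpha> p) * wp ^ \<alpha> p * wq ^ \<alpha> q else 0)" for \<alpha>
  have taylor: "(\<lambda>k. h k * z ^ k) sums g (s0 + z)" for z
  proof -
    have "g holomorphic_on ball s0 (norm z + 1)"
      using hol by (rule holomorphic_on_subset) simp
    then have series: "\<forall>w\<in>ball s0 (norm z + 1). (\<lambda>n. (deriv ^^ n) g s0 / fact n * (w - s0) ^ n) sums g w"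
      by (simp add: holomorphic_iff_power_series)
    show ?thesis
      unfolding h_def using bspec[OF series, of "s0 + z"] by (simp add: dist_norm)
  qed
  have abs: "summable (\<lambda>k. norm (h k) * R ^ k)" if "R \<ge> 0" for R
    using powser_insidea[OF sums_summable[OF taylor[of "of_real (R + 1)"]], of "of_real R"] that
    by (simp add: norm_mult norm_power)
  show "\<exists>r>0. \<exists>c. \<forall>x. dist x a < r \<longrightarrow> ((\<lambda>\<alpha>. c \<alpha> * complex_of_real (mpow (x - a) \<alpha>)) has_sum
      g (b + wp * of_real (x $ p) + wq * of_real (x $ q))) UNIV"
  proof (intro exI[of _ 1] conjI exI[of _ c] allI impI)
    fix x :: "real ^ 'n"
    define u where "u = wp * of_real (x $ p - a $ p)"
    define v where "v = wq * of_real (x $ q - a $ q)"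
    have "g (b + wp * of_real (x $ p) + wq * of_real (x $ q)) = (\<Sum>k. h k * (u + v) ^ k)"
      using sums_unique[OF taylor[of "u + v"]] by (simp add: s0_def u_def v_def algebra_simps)
    then have "((\<lambda>(l, m). h (l + m) * (of_nat ((l + m) choose l) * u ^ l * v ^ m))
        has_sum g (b + wp * of_real (x $ p) + wq * of_real (x $ q))) UNIV"
      using has_sum_binomial_expansion[of h u v] abs by simp
    then have "((\<lambda>\<alpha>. h (\<alpha> p + \<alpha> q) * (of_nat ((\<alpha> p + \<alpha> q) choose \<alpha> p) * u ^ \<alpha> p * v ^ \<alpha> q))
        has_sum g (b + wp * of_real (x $ p) + wq * of_real (x $ q))) supp"
      unfolding supp_def has_sum_reindex_two_coords[OF pq] by simp
    also have "?this \<longleftrightarrow> ((\<lambda>\<alpha>. c \<alpha> * complex_of_real (mpow (x - a) \<alpha>))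
        has_sum g (b + wp * of_real (x $ p) + wq * of_real (x $ q))) supp"
      using pq
      by (intro has_sum_cong) (simp add: c_def supp_def u_def v_def mpow_two_coords power_mult_distrib mult_ac)
    finally show "((\<lambda>\<alpha>. c \<alpha> * complex_of_real (mpow (x - a) \<alpha>)) has_sum
        g (b + wp * of_real (x $ p) + wq * of_real (x $ q))) UNIV"
      by (rule has_sum_cong_neutral[THEN iffD1, rotated -1]) (auto simp: c_def)
  qed simp
qed

lemma inner_ebas: "inner x (ebas idx k) = x $ idx k"
  by (simp add: ebas_def inner_axis)

lemma ebas_nth: "ebas idx k $ i = (if i = idx k then 1 else 0)"
  by (simp add: ebas_def axis_def)

lemma inner_alpha_minus: "inner x (alpha_minus idx j) = x $ idx (2 * j - 1) - x $ idx (2 * j)"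
  by (simp add: alpha_minus_def inner_diff_right inner_ebas)

lemma inner_alpha_plus: "inner x (alpha_plus idx j) = x $ idx (2 * j - 1) + x $ idx (2 * j)"
  by (simp add: alpha_plus_def inner_add_right inner_ebas)

lemma rpair_add: "rpair lam (x + y) = rpair lam x + rpair lam y"
  by (simp add: rpair_def distrib_left sum.distrib)

lemma rpair_diff: "rpair lam (x - y) = rpair lam x - rpair lam y"
  by (simp add: rpair_def right_diff_distrib sum_subtractf)

lemma rpair_scaleR: "rpair lam (r *\<^sub>R x) = of_real r * rpair lam x"
  by (simp add: rpair_def sum_distrib_left mult_ac)

lemma rpair_0 [simp]: "rpair lam 0 = 0"
  by (simp add: rpair_def)

lemma rpair_ebas: "rpair lam (ebas idx k) = lam $ idx k"
  by (simp add: rpair_def ebas_nth if_distrib cong: if_cong)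

lemma rpair_alpha_minus: "rpair lam (alpha_minus idx j) = lam $ idx (2 * j - 1) - lam $ idx (2 * j)"
  by (simp add: alpha_minus_def rpair_diff rpair_ebas)

lemma rpair_alpha_plus: "rpair lam (alpha_plus idx j) = lam $ idx (2 * j - 1) + lam $ idx (2 * j)"
  by (simp add: alpha_plus_def rpair_add rpair_ebas)

lemma solves_eigen_iff_real:
  "solves_eigen idx N km kp lam f \<longleftrightarrow>
    (\<forall>\<xi> x. (\<forall>j\<in>{1..N div 2}. inner x (alpha_minus idx j) \<noteq> 0 \<and> inner x (alpha_plus idx j) \<noteq> 0) \<longrightarrow>
      T_real idx N km kp f \<xi> x = \<i> * rpair lam \<xi> * f x)"
proof -
  have T_real_0: "T_real idx N km kp f 0 x = 0" for x
    by (simp add: T_real_def dirderiv_0)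
  have cpair_eq: "cpair lam \<xi> = rpair lam (\<chi> i. Re (\<xi> $ i)) + \<i> * rpair lam (\<chi> i. Im (\<xi> $ i))" for \<xi>
  proof -
    have "cpair lam \<xi> = (\<Sum>i\<in>UNIV. lam $ i * of_real (Re (\<xi> $ i)) + \<i> * (lam $ i * of_real (Im (\<xi> $ i))))"
      unfolding cpair_def by (rule sum.cong[OF refl]) (subst complex_eq, simp add: algebra_simps)
    then show ?thesis
      by (simp add: rpair_def sum.distrib sum_distrib_left)
  qed
  show ?thesis
  proof (intro iffI allI impI)
    fix \<xi> x
    assume "solves_eigen idx N km kp lam f"
      and x: "\<forall>j\<in>{1..N div 2}. inner x (alpha_minus idx j) \<noteq> 0 \<and> inner x (alpha_plus idx j) \<noteq> 0"
    then have "T_cplx idx N km kp f (\<chi> i. of_real (\<xi> $ i)) x = \<i> * cpair lam (\<chi> i. of_real (\<xi> $ i)) * f x"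
      unfolding solves_eigen_def by blast
    moreover have "(\<chi> i. Re (complex_of_real (\<xi> $ i))) = \<xi>" "(\<chi> i. Im (complex_of_real (\<xi> $ i))) = 0"
      by (simp_all add: vec_eq_iff)
    ultimately show "T_real idx N km kp f \<xi> x = \<i> * rpair lam \<xi> * f x"
      by (simp add: T_cplx_def cpair_eq T_real_0)
  next
    assume real: "\<forall>\<xi> x. (\<forall>j\<in>{1..N div 2}. inner x (alpha_minus idx j) \<noteq> 0 \<and> inner x (alpha_plus idx j) \<noteq> 0) \<longrightarrow>
      T_real idx N km kp f \<xi> x = \<i> * rpair lam \<xi> * f x"
    show "solves_eigen idx N km kp lam f"
      unfolding solves_eigen_def T_cplx_def cpair_eq using real by (simp add: algebra_simps)
  qed
qed

lemma closure_avoiding_hyperplanes: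
  fixes A :: "'a::euclidean_space set"
  assumes "finite A" "0 \<notin> A"
  shows "closure {x. \<forall>a\<in>A. inner x a \<noteq> 0} = UNIV"
  using assms
proof (induction A rule: finite_induct)
  case (insert a A)
  have "closure (UNIV - {x. a \<bullet> x = 0}) = UNIV"
    using insert.prems dim_hyperplane[of a] by (intro dense_complement_subspace) auto
  then have dense: "closure {x. inner x a \<noteq> 0} = UNIV"
    by (simp add: set_diff_eq inner_commute)
  have "open {x :: 'a. inner x a \<noteq> 0}"
    by (intro open_Collect_neq continuous_intros)
  then have incl: "{x. inner x a \<noteq> 0} \<inter> closure {x. \<forall>b\<in>A. inner x b \<noteq> 0}
      \<subseteq> closure ({x. inner x a \<noteq> 0} \<inter> {x. \<forall>b\<in>A. inner x b \<noteq> 0})"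
    by (rule open_Int_closure_subset)
  have "{x. inner x a \<noteq> 0} \<inter> {x. \<forall>b\<in>A. inner x b \<noteq> 0} = {x. \<forall>b\<in>insert a A. inner x b \<noteq> 0}"
    by auto
  with incl have "{x. inner x a \<noteq> 0} \<subseteq> closure {x. \<forall>b\<in>insert a A. inner x b \<noteq> 0}"
    using insert.IH insert.prems by simp
  then have "closure {x. inner x a \<noteq> 0} \<subseteq> closure {x. \<forall>b\<in>insert a A. inner x b \<noteq> 0}"
    by (rule closure_minimal) simp
  with dense show ?case
    by auto
qed simp

section \<open>The orthogonal root subsystem\<close>

locale enumerated_coords =
  fixes idx :: "nat \<Rightarrow> 'n::finite" and N :: nat
  assumes bij_idx: "bij_betw idx {1..N} UNIV"
begin

abbreviation roots :: "(bool \<times> nat) set" where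
  "roots \<equiv> UNIV \<times> {1..N div 2}"

definition alpha :: "bool \<times> nat \<Rightarrow> real ^ 'n" where
  "alpha r = (if fst r then alpha_plus idx (snd r) else alpha_minus idx (snd r))"

definition kappa :: "(nat \<Rightarrow> real) \<Rightarrow> (nat \<Rightarrow> real) \<Rightarrow> bool \<times> nat \<Rightarrow> real" where
  "kappa km kp r = (if fst r then kp (snd r) else km (snd r))"

definition regular :: "(real ^ 'n) set" where
  "regular = {x. \<forall>r\<in>roots. inner x (alpha r) \<noteq> 0}"

lemma idx_eq_iff: "k \<in> {1..N} \<Longrightarrow> k' \<in> {1..N} \<Longrightarrow> idx k = idx k' \<longleftrightarrow> k = k'"
  using bij_idx by (auto simp: bij_betw_def inj_on_eq_iff)

lemma idx_surj: obtains k where "k \<in> {1..N}" "idx k = i"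
proof -
  have "i \<in> idx ` {1..N}"
    using bij_idx by (simp add: bij_betw_def)
  then show ?thesis
    using that by blast
qed

lemma sum_roots: "(\<Sum>r\<in>roots. g r) = (\<Sum>j\<in>{1..N div 2}. g (False, j) + g (True, j))"
proof -
  have "(\<Sum>r\<in>roots. g r) = (\<Sum>b\<in>UNIV. \<Sum>j\<in>{1..N div 2}. g (b, j))"
    by (simp add: sum.cartesian_product)
  then show ?thesis
    by (simp add: UNIV_bool sum.distrib)
qed

lemma prod_roots: "(\<Prod>r\<in>roots. g r) = (\<Prod>j\<in>{1..N div 2}. g (False, j) * g (True, j))"
proof -
  have "(\<Prod>r\<in>roots. g r) = (\<Prod>b\<in>UNIV. \<Prod>j\<in>{1..N div 2}. g (b, j))"
    by (simp add: prod.cartesian_product)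
  then show ?thesis
    by (simp add: UNIV_bool prod.distrib)
qed

lemma alpha_simps [simp]: "alpha (False, j) = alpha_minus idx j" "alpha (True, j) = alpha_plus idx j"
  by (simp_all add: alpha_def)

lemma kappa_simps [simp]: "kappa km kp (False, j) = km j" "kappa km kp (True, j) = kp j"
  by (simp_all add: kappa_def)

lemma inner_alpha:
  "inner x (alpha r) = x $ idx (2 * snd r - 1) + (if fst r then 1 else -1) * x $ idx (2 * snd r)"
  by (simp add: alpha_def inner_alpha_minus inner_alpha_plus)

lemma alpha_nth:
  assumes "r \<in> roots" "k \<in> {1..N}"
  shows "alpha r $ idx k = (if k = 2 * snd r - 1 then 1 else if k = 2 * snd r then (if fst r then 1 else -1) else 0)"
proof -
  have "2 * snd r - 1 \<in> {1..N}" "2 * snd r \<in> {1..N}" "2 * snd r - 1 \<noteq> 2 * snd r"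
    using assms(1) by auto
  then show ?thesis
    using assms(2)
    by (auto simp: alpha_def alpha_minus_def alpha_plus_def ebas_nth idx_eq_iff)
qed

lemma inner_alpha_alpha:
  assumes r: "r \<in> roots" and r': "r' \<in> roots"
  shows "inner (alpha r) (alpha r') = (if r = r' then 2 else 0)"
proof -
  obtain b j b' j' where rr: "r = (b, j)" "r' = (b', j')" by (cases r, cases r')
  have j: "j \<ge> 1" "j' \<ge> 1" "2 * j' - 1 \<in> {1..N}" "2 * j' \<in> {1..N}"
    using r r' by (auto simp: rr)
  then have "2 * j' - 1 \<noteq> 2 * j" "2 * j' \<noteq> 2 * j - 1"
    by presburger+
  then have "alpha r $ idx (2 * j' - 1) = (if j' = j then 1 else 0)"
    "alpha r $ idx (2 * j') = (if j' = j then (if b then 1 else -1) else 0)"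
    using alpha_nth[OF r j(3)] alpha_nth[OF r j(4)] j by (auto simp: rr)
  then show ?thesis
    using inner_alpha[of "alpha r" r'] by (auto simp: rr)
qed

lemma inner_alpha_ebas_N:
  assumes "odd N" "r \<in> roots"
  shows "inner (alpha r) (ebas idx N) = 0"
proof -
  have "N \<in> {1..N}" "N \<noteq> 2 * snd r - 1" "N \<noteq> 2 * snd r"
    using assms by (auto elim: oddE)
  then show ?thesis
    using assms by (simp add: inner_ebas alpha_nth)
qed

lemma regular_iff:
  "x \<in> regular \<longleftrightarrow> (\<forall>j\<in>{1..N div 2}. inner x (alpha_minus idx j) \<noteq> 0 \<and> inner x (alpha_plus idx j) \<noteq> 0)"
  by (auto simp: regular_def alpha_def)

lemma closure_regular: "closure regular = UNIV"
proof -
  have "alpha r \<noteq> 0" if "r \<in> roots" for r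
    using inner_alpha_alpha[OF that that] by auto
  then have "0 \<notin> alpha ` roots"
    by auto
  then show ?thesis
    using closure_avoiding_hyperplanes[of "alpha ` roots"] by (simp add: regular_def)
qed

lemma T_real_eq:
  "T_real idx N km kp f \<xi> x = dirderiv f \<xi> x
     + (\<Sum>r\<in>roots. of_real (kappa km kp r * inner (alpha r) \<xi>) * diffquot f (alpha r) x)"
  unfolding T_real_def sum_roots by simp

lemma h0_eq_sum: "h0 idx N x = x - (\<Sum>r\<in>roots. (inner x (alpha r) / 2) *\<^sub>R alpha r)"
  unfolding h0_def sum_roots by simp

lemma Mkappa_eq:
  "Mkappa idx N km kp lam x = exp (\<i> * rpair lam (h0 idx N x))
     * (\<Prod>r\<in>roots. Mconf (kappa km kp r) (\<i> / 2 * rpair lam (alpha r) * of_real (inner x (alpha r))))"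
  unfolding Mkappa_def prod_roots
  by (simp add: rpair_alpha_minus rpair_alpha_plus inner_alpha_minus inner_alpha_plus mult_ac)

lemma T_real_alpha:
  assumes "r \<in> roots"
  shows "T_real idx N km kp f (alpha r) x
    = dirderiv f (alpha r) x + of_real (2 * kappa km kp r) * diffquot f (alpha r) x"
proof -
  have "(\<Sum>r'\<in>roots. of_real (kappa km kp r' * inner (alpha r') (alpha r)) * diffquot f (alpha r') x)
      = (\<Sum>r'\<in>roots. if r' = r then of_real (2 * kappa km kp r) * diffquot f (alpha r) x else 0)"
    using assms by (intro sum.cong) (auto simp: inner_alpha_alpha)
  then show ?thesis
    using assms by (simp add: T_real_eq)
qed

lemma T_real_ebas_N:
  assumes "odd N"
  shows "T_real idx N km kp f (ebas idx N) x = dirderiv f (ebas idx N) x"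
  using assms by (simp add: T_real_eq inner_alpha_ebas_N)

lemma inner_h0_alpha:
  assumes "r \<in> roots"
  shows "inner (h0 idx N x) (alpha r) = 0"
proof -
  have "(\<Sum>r'\<in>roots. (inner x (alpha r') / 2) * inner (alpha r') (alpha r))
      = (\<Sum>r'\<in>roots. if r' = r then inner x (alpha r) else 0)"
    using assms by (intro sum.cong) (auto simp: inner_alpha_alpha)
  then show ?thesis
    using assms by (simp add: h0_eq_sum inner_diff_left inner_sum_left)
qed

lemma h0_eq: "h0 idx N x = (if even N then 0 else (x $ idx N) *\<^sub>R ebas idx N)"
proof (subst vec_eq_iff, intro allI)
  fix i
  obtain k where k: "k \<in> {1..N}" "i = idx k"
    using idx_surj by metis
  show "h0 idx N x $ i = (if even N then 0 else (x $ idx N) *\<^sub>R ebas idx N) $ i"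
  proof (cases "k \<le> 2 * (N div 2)")
    case True
    define j where "j = (k + 1) div 2"
    have "(True, j) \<in> roots" "(False, j) \<in> roots" and kj: "k = 2 * j - 1 \<or> k = 2 * j"
      using k True by (auto simp: j_def)
    then have "h0 idx N x $ idx (2 * j - 1) - h0 idx N x $ idx (2 * j) = 0"
      "h0 idx N x $ idx (2 * j - 1) + h0 idx N x $ idx (2 * j) = 0"
      using inner_h0_alpha[of "(False, j)" x] inner_h0_alpha[of "(True, j)" x]
      by (simp_all add: inner_alpha_minus inner_alpha_plus)
    then have "h0 idx N x $ idx (2 * j - 1) = 0" "h0 idx N x $ idx (2 * j) = 0"
      by linarith+
    then have "h0 idx N x $ idx k = 0"
      using kj by auto
    moreover have "odd N \<Longrightarrow> k \<noteq> N"
      using True by (auto elim: oddE)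
    ultimately show ?thesis
      using k by (auto simp: ebas_nth idx_eq_iff)
  next
    case False
    then have N: "odd N" "k = N"
      using k by (auto elim: evenE)
    have "inner (x - h0 idx N x) (ebas idx N)
        = (\<Sum>r\<in>roots. (inner x (alpha r) / 2) * inner (alpha r) (ebas idx N))"
      by (simp add: h0_eq_sum inner_sum_left)
    also have "\<dots> = 0"
      using inner_alpha_ebas_N[OF N(1)] by (intro sum.neutral) simp
    finally have "inner (x - h0 idx N x) (ebas idx N) = 0" .
    then show ?thesis
      using N k by (simp add: ebas_nth inner_diff_left inner_ebas)
  qed
qed

end

section \<open>Uniqueness\<close>

context enumerated_coords
begin

lemma solves_eigenD:
  assumes "solves_eigen idx N km kp lam f" "z \<in> regular"
  shows "T_real idx N km kp f \<xi> z = \<i> * rpair lam \<xi> * f z"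
  using assms unfolding solves_eigen_iff_real regular_iff by blast

lemma eigenfunction_factor_alpha:
  fixes f :: "real ^ 'n \<Rightarrow> complex"
  assumes cont: "\<And>x. isCont f x"
    and deriv: "\<And>x v t. ((\<lambda>s. f (x + s *\<^sub>R v)) has_vector_derivative dirderiv f v (x + t *\<^sub>R v)) (at t)"
    and eigen: "solves_eigen idx N km kp lam f"
    and r: "r \<in> roots" and \<kappa>: "kappa km kp r \<ge> 0"
  shows "f x = f (tau (alpha r) x)
    * Mconf (kappa km kp r) (\<i> / 2 * rpair lam (alpha r) * of_real (inner x (alpha r)))"
proof -
  have aa: "inner (alpha r) (alpha r) = 2"
    using inner_alpha_alpha[OF r r] by simp
  have "f x = f (x - (inner x (alpha r) / inner (alpha r) (alpha r)) *\<^sub>R alpha r)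
    * Mconf (kappa km kp r) (\<i> * rpair lam (alpha r) * of_real (inner x (alpha r) / inner (alpha r) (alpha r)))"
  proof (rule line_factorization[OF cont deriv \<kappa> _ closure_regular])
    show "alpha r \<noteq> 0"
      using aa by auto
    show "x + (t - inner x (alpha r) / inner (alpha r) (alpha r)) *\<^sub>R alpha r \<in> regular"
      if "x \<in> regular" "t \<noteq> 0" for x t
    proof -
      have "inner (x + (t - inner x (alpha r) / 2) *\<^sub>R alpha r) (alpha r')
          = (if r' = r then 2 * t else inner x (alpha r'))" if "r' \<in> roots" for r'
        using inner_alpha_alpha[OF r that] by (auto simp: inner_add_left algebra_simps)
      then show ?thesis
        using that unfolding regular_def aa by auto
    qed
    show "dirderiv f (alpha r) z + of_real (kappa km kp r)
        * (f z - f (z - (inner z (alpha r) / inner (alpha r) (alpha r)) *\<^sub>R alpha r))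
        / of_real (inner z (alpha r) / inner (alpha r) (alpha r))
      = \<i> * rpair lam (alpha r) * f z" if "z \<in> regular" for z
    proof -
      have "of_real (2 * k) * (F / complex_of_real u) = of_real k * F / of_real (u / 2)" for k u F
        by (cases "u = 0") (simp_all add: field_simps)
      then show ?thesis
        using solves_eigenD[OF eigen that, of "alpha r"]
        by (simp add: T_real_alpha[OF r] diffquot_def tau_def aa mult_ac)
    qed
  qed
  then show ?thesis
    by (simp add: aa tau_def field_simps)
qed

text \<open>The roots are mutually orthogonal, so the projections \<open>tau (alpha r)\<close> commute and each one
  leaves the factors belonging to the other roots unchanged.\<close>

lemma eigenfunction_factor_roots:
  fixes f :: "real ^ 'n \<Rightarrow> complex"
  assumes cont: "\<And>x. isCont f x"
    and deriv: "\<And>x v t. ((\<lambda>s. f (x + s *\<^sub>R v)) has_vector_derivative dirderiv f v (x + t *\<^sub>R v)) (at t)"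
    and eigen: "solves_eigen idx N km kp lam f"
    and \<kappa>: "\<And>r. r \<in> roots \<Longrightarrow> kappa km kp r \<ge> 0" and I: "I \<subseteq> roots"
  shows "f x = f (x - (\<Sum>r\<in>I. (inner x (alpha r) / 2) *\<^sub>R alpha r))
    * (\<Prod>r\<in>I. Mconf (kappa km kp r) (\<i> / 2 * rpair lam (alpha r) * of_real (inner x (alpha r))))"
proof -
  have "finite I"
    using I by (rule finite_subset) simp
  then show ?thesis
    using I
  proof (induction I arbitrary: x rule: finite_induct)
    case (insert r I)
    have r: "r \<in> roots" and I: "I \<subseteq> roots"
      using insert.prems by auto
    define y where "y = tau (alpha r) x"
    have y_inner: "inner y (alpha r') = inner x (alpha r')" if "r' \<in> I" for r'
    proof -
      have "r' \<in> roots" "r' \<noteq> r"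
        using that I insert.hyps(2) by auto
      then have "inner (alpha r) (alpha r') = 0"
        using inner_alpha_alpha[OF r] by simp
      then show ?thesis
        by (simp add: y_def tau_def inner_diff_left)
    qed
    have "f x = f y * Mconf (kappa km kp r) (\<i> / 2 * rpair lam (alpha r) * of_real (inner x (alpha r)))"
      unfolding y_def by (rule eigenfunction_factor_alpha[OF cont deriv eigen r \<kappa>[OF r]])
    also have "f y = f (y - (\<Sum>r\<in>I. (inner y (alpha r) / 2) *\<^sub>R alpha r))
        * (\<Prod>r\<in>I. Mconf (kappa km kp r) (\<i> / 2 * rpair lam (alpha r) * of_real (inner y (alpha r))))"
      by (rule insert.IH[OF I])
    also have "(\<Sum>r\<in>I. (inner y (alpha r) / 2) *\<^sub>R alpha r) = (\<Sum>r\<in>I. (inner x (alpha r) / 2) *\<^sub>R alpha r)"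
      by (rule sum.cong) (simp_all add: y_inner)
    also have "(\<Prod>r\<in>I. Mconf (kappa km kp r) (\<i> / 2 * rpair lam (alpha r) * of_real (inner y (alpha r))))
        = (\<Prod>r\<in>I. Mconf (kappa km kp r) (\<i> / 2 * rpair lam (alpha r) * of_real (inner x (alpha r))))"
      by (rule prod.cong) (simp_all add: y_inner)
    finally show ?case
      using insert.hyps by (simp add: y_def tau_def algebra_simps)
  qed simp
qed

lemma eigenfunction_along_ebas_N:
  fixes f :: "real ^ 'n \<Rightarrow> complex"
  assumes cont: "\<And>x. isCont f x"
    and deriv: "\<And>x v t. ((\<lambda>s. f (x + s *\<^sub>R v)) has_vector_derivative dirderiv f v (x + t *\<^sub>R v)) (at t)"
    and eigen: "solves_eigen idx N km kp lam f" and N: "odd N"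
  shows "f x = f (x - (x $ idx N) *\<^sub>R ebas idx N) * exp (\<i> * lam $ idx N * of_real (x $ idx N))"
proof -
  have ee: "inner (ebas idx N) (ebas idx N) = 1"
    by (simp add: inner_ebas ebas_nth)
  have orth: "inner (ebas idx N) (alpha r) = 0" if "r \<in> roots" for r
    using inner_alpha_ebas_N[OF N that] by (simp add: inner_commute)
  have "f x = f (x - (inner x (ebas idx N) / inner (ebas idx N) (ebas idx N)) *\<^sub>R ebas idx N)
    * Mconf 0 (\<i> * lam $ idx N * of_real (inner x (ebas idx N) / inner (ebas idx N) (ebas idx N)))"
  proof (rule line_factorization[OF cont deriv order_refl _ closure_regular])
    show "ebas idx N \<noteq> 0"
      using ee by auto
    show "x + (t - inner x (ebas idx N) / inner (ebas idx N) (ebas idx N)) *\<^sub>R ebas idx N \<in> regular"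
      if "x \<in> regular" for x t
      using that orth by (simp add: regular_def inner_add_left)
    show "dirderiv f (ebas idx N) z + of_real 0
        * (f z - f (z - (inner z (ebas idx N) / inner (ebas idx N) (ebas idx N)) *\<^sub>R ebas idx N))
        / of_real (inner z (ebas idx N) / inner (ebas idx N) (ebas idx N))
      = \<i> * lam $ idx N * f z" if "z \<in> regular" for z
      using solves_eigenD[OF eigen that, of "ebas idx N"]
      by (simp add: T_real_ebas_N[OF N] rpair_ebas)
  qed
  then show ?thesis
    by (simp add: ee inner_ebas ebas_nth Mconf_0_eq_exp)
qed

theorem eigenfunction_unique:
  fixes f :: "real ^ 'n \<Rightarrow> complex"
  assumes cont: "\<And>x. isCont f x"
    and deriv: "\<And>x v t. ((\<lambda>s. f (x + s *\<^sub>R v)) has_vector_derivative dirderiv f v (x + t *\<^sub>R v)) (at t)"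
    and eigen: "solves_eigen idx N km kp lam f"
    and \<kappa>: "\<And>r. r \<in> roots \<Longrightarrow> kappa km kp r \<ge> 0" and f0: "f 0 = 1"
  shows "f x = Mkappa idx N km kp lam x"
proof -
  have "f x = f (h0 idx N x)
    * (\<Prod>r\<in>roots. Mconf (kappa km kp r) (\<i> / 2 * rpair lam (alpha r) * of_real (inner x (alpha r))))"
    unfolding h0_eq_sum by (rule eigenfunction_factor_roots[OF cont deriv eigen \<kappa> order_refl])
  moreover have "f (h0 idx N x) = exp (\<i> * rpair lam (h0 idx N x))"
  proof (cases "even N")
    case False
    then show ?thesis
      using eigenfunction_along_ebas_N[OF cont deriv eigen False, of "h0 idx N x"] f0
      by (simp add: h0_eq ebas_nth rpair_scaleR rpair_ebas mult_ac)
  qed (simp add: h0_eq f0)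
  ultimately show ?thesis
    by (simp add: Mkappa_eq)
qed

end

section \<open>Existence and analyticity\<close>

context enumerated_coords
begin

lemma rpair_h0: "rpair lam (h0 idx N x) = (if even N then 0 else lam $ idx N * of_real (x $ idx N))"
  by (simp add: h0_eq rpair_scaleR rpair_ebas mult.commute)

lemma h0_add_alpha:
  assumes "r \<in> roots"
  shows "h0 idx N (x + s *\<^sub>R alpha r) = h0 idx N x"
  using inner_alpha_ebas_N[OF _ assms] by (simp add: h0_eq inner_ebas)

lemma Mkappa_along_alpha:
  assumes r: "r \<in> roots"
  obtains K where "\<And>s. Mkappa idx N km kp lam (x + s *\<^sub>R alpha r)
    = K * Mconf (kappa km kp r) (\<i> / 2 * rpair lam (alpha r) * of_real (inner x (alpha r) + 2 * s))"
proof
  define F where "F r' y = Mconf (kappa km kp r') (\<i> / 2 * rpair lam (alpha r') * of_real (inner y (alpha r')))"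
    for r' y
  have other: "F r' (x + s *\<^sub>R alpha r) = F r' x" if "r' \<in> roots - {r}" for r' s
  proof -
    have "inner (alpha r) (alpha r') = 0"
      using that inner_alpha_alpha[OF r, of r'] by auto
    then show ?thesis
      by (simp add: F_def inner_add_left)
  qed
  have "(\<Prod>r'\<in>roots. F r' (x + s *\<^sub>R alpha r)) = F r (x + s *\<^sub>R alpha r) * (\<Prod>r'\<in>roots - {r}. F r' x)" for s
  proof -
    have "(\<Prod>r'\<in>roots. F r' (x + s *\<^sub>R alpha r))
        = F r (x + s *\<^sub>R alpha r) * (\<Prod>r'\<in>roots - {r}. F r' (x + s *\<^sub>R alpha r))"
      by (rule prod.remove[OF _ r]) simp
    also have "(\<Prod>r'\<in>roots - {r}. F r' (x + s *\<^sub>R alpha r)) = (\<Prod>r'\<in>roots - {r}. F r' x)"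
      by (rule prod.cong[OF refl other])
    finally show ?thesis .
  qed
  moreover have "F r (x + s *\<^sub>R alpha r)
      = Mconf (kappa km kp r) (\<i> / 2 * rpair lam (alpha r) * of_real (inner x (alpha r) + 2 * s))" for s
    using inner_alpha_alpha[OF r r] by (simp add: F_def inner_add_left mult.commute)
  ultimately show "Mkappa idx N km kp lam (x + s *\<^sub>R alpha r)
      = (exp (\<i> * rpair lam (h0 idx N x)) * (\<Prod>r'\<in>roots - {r}. F r' x))
        * Mconf (kappa km kp r) (\<i> / 2 * rpair lam (alpha r) * of_real (inner x (alpha r) + 2 * s))" for s
    unfolding Mkappa_eq h0_add_alpha[OF r] F_def[symmetric] by (simp add: mult_ac)
qed

lemma Mkappa_eigen_alpha:
  assumes r: "r \<in> roots" and \<kappa>: "kappa km kp r \<ge> 0" and x: "x \<in> regular"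
  shows "T_real idx N km kp (Mkappa idx N km kp lam) (alpha r) x
    = \<i> * rpair lam (alpha r) * Mkappa idx N km kp lam x"
proof -
  obtain K where K: "\<And>s. Mkappa idx N km kp lam (x + s *\<^sub>R alpha r)
    = K * Mconf (kappa km kp r) (\<i> / 2 * rpair lam (alpha r) * of_real (inner x (alpha r) + 2 * s))"
    using Mkappa_along_alpha[OF r] by blast
  have "inner x (alpha r) \<noteq> 0" "inner (alpha r) (alpha r) = 2"
    using x r inner_alpha_alpha[OF r r] by (auto simp: regular_def)
  from Mconf_line_eigen[OF K \<kappa> this] show ?thesis
    by (simp add: T_real_alpha[OF r] mult_ac)
qed

lemma Mkappa_along_ebas_N:
  assumes N: "odd N"
  shows "Mkappa idx N km kp lam (x + s *\<^sub>R ebas idx N) = exp (\<i> * lam $ idx N * of_real s) * Mkappa idx N km kp lam x"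
proof -
  have "inner (x + s *\<^sub>R ebas idx N) (alpha r) = inner x (alpha r)" if "r \<in> roots" for r
  proof -
    have "inner (ebas idx N) (alpha r) = 0"
      using inner_alpha_ebas_N[OF N that] by (simp add: inner_commute)
    then show ?thesis
      by (simp add: inner_add_left)
  qed
  then have "(\<Prod>r\<in>roots. Mconf (kappa km kp r) (\<i> / 2 * rpair lam (alpha r) * of_real (inner (x + s *\<^sub>R ebas idx N) (alpha r))))
      = (\<Prod>r\<in>roots. Mconf (kappa km kp r) (\<i> / 2 * rpair lam (alpha r) * of_real (inner x (alpha r))))"
    by (intro prod.cong) simp_all
  then show ?thesis
    using N by (simp add: Mkappa_eq rpair_h0 ebas_nth distrib_left exp_add mult_ac)
qed

lemma Mkappa_eigen_ebas_N:
  assumes N: "odd N"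
  shows "T_real idx N km kp (Mkappa idx N km kp lam) (ebas idx N) x
    = \<i> * rpair lam (ebas idx N) * Mkappa idx N km kp lam x"
proof -
  have "((\<lambda>z. exp (\<i> * lam $ idx N * z)) has_field_derivative \<i> * lam $ idx N * exp (\<i> * lam $ idx N * of_real 0)) (at (of_real 0))"
    by (auto intro!: derivative_eq_intros)
  from has_vector_derivative_mult_left[OF has_vector_derivative_real_field[OF this], of "Mkappa idx N km kp lam x"]
  have "((\<lambda>s. Mkappa idx N km kp lam (x + s *\<^sub>R ebas idx N)) has_vector_derivative
      \<i> * lam $ idx N * Mkappa idx N km kp lam x) (at 0)"
    unfolding Mkappa_along_ebas_N[OF N] by simp
  then show ?thesis
    unfolding T_real_ebas_N[OF N] dirderiv_def rpair_ebas by (rule vector_derivative_at)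
qed

lemma differentiable_Mkappa:
  assumes \<kappa>: "\<And>r. r \<in> roots \<Longrightarrow> kappa km kp r \<ge> 0"
  shows "Mkappa idx N km kp lam differentiable (at x)"
proof -
  have "(\<lambda>y. Mconf (kappa km kp r) (\<i> / 2 * rpair lam (alpha r) * of_real (inner y (alpha r)))) differentiable (at x)"
    if "r \<in> roots" for r
  proof (rule differentiable_compose[of "Mconf (kappa km kp r)"])
    show "Mconf (kappa km kp r) differentiable (at (\<i> / 2 * rpair lam (alpha r) * of_real (inner x (alpha r))))"
      using has_field_derivative_Mconf[OF \<kappa>[OF that]]
      by (intro field_differentiable_imp_differentiable) (auto simp: field_differentiable_def)
  qed (rule differentiable_linear_form)
  moreover have "(\<lambda>y. exp (\<i> * rpair lam (h0 idx N y))) differentiable (at x)"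
  proof (rule differentiable_compose[of exp])
    show "exp differentiable (at (\<i> * rpair lam (h0 idx N x)))"
      by (intro field_differentiable_imp_differentiable field_differentiable_within_exp)
    show "(\<lambda>y. \<i> * rpair lam (h0 idx N y)) differentiable (at x)"
    proof (cases "even N")
      case False
      then show ?thesis
        using differentiable_linear_form[of "\<i> * lam $ idx N" "ebas idx N" x]
        by (simp add: rpair_h0 inner_ebas mult_ac)
    qed (simp add: rpair_h0)
  qed
  ultimately show ?thesis
    unfolding Mkappa_eq[abs_def] by (intro differentiable_mult differentiable_prod) simp_all
qed

lemma linear_T_real:
  assumes "(f has_derivative D) (at x)"
  shows "linear (\<lambda>\<xi>. T_real idx N km kp f \<xi> x)"
proof -
  have "linear D"
    using has_derivative_linear[OF assms] .
  show ?thesis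
    unfolding T_real_eq dirderiv_has_derivative[OF assms]
  proof (rule linearI)
    show "D (\<eta> + \<zeta>) + (\<Sum>r\<in>roots. of_real (kappa km kp r * inner (alpha r) (\<eta> + \<zeta>)) * diffquot f (alpha r) x)
        = D \<eta> + (\<Sum>r\<in>roots. of_real (kappa km kp r * inner (alpha r) \<eta>) * diffquot f (alpha r) x)
          + (D \<zeta> + (\<Sum>r\<in>roots. of_real (kappa km kp r * inner (alpha r) \<zeta>) * diffquot f (alpha r) x))" for \<eta> \<zeta>
      using linear_add[OF \<open>linear D\<close>]
      by (simp add: inner_add_right distrib_left distrib_right sum.distrib algebra_simps)
    show "D (c *\<^sub>R \<eta>) + (\<Sum>r\<in>roots. of_real (kappa km kp r * inner (alpha r) (c *\<^sub>R \<eta>)) * diffquot f (alpha r) x)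
        = c *\<^sub>R (D \<eta> + (\<Sum>r\<in>roots. of_real (kappa km kp r * inner (alpha r) \<eta>) * diffquot f (alpha r) x))" for c \<eta>
      using linear_scale[OF \<open>linear D\<close>]
      by (simp add: scaleR_conv_of_real[where 'a=complex] sum_distrib_left algebra_simps)
  qed
qed

lemma linear_eq_on_roots:
  fixes L1 L2 :: "real ^ 'n \<Rightarrow> 'b::real_vector"
  assumes "linear L1" "linear L2"
    and roots: "\<And>r. r \<in> roots \<Longrightarrow> L1 (alpha r) = L2 (alpha r)"
    and ebas: "odd N \<Longrightarrow> L1 (ebas idx N) = L2 (ebas idx N)"
  shows "L1 \<xi> = L2 \<xi>"
proof -
  have decomp: "L \<xi> = L (h0 idx N \<xi>) + (\<Sum>r\<in>roots. (inner \<xi> (alpha r) / 2) *\<^sub>R L (alpha r))"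
    if "linear L" for L :: "real ^ 'n \<Rightarrow> 'b"
  proof -
    have "L \<xi> = L (h0 idx N \<xi> + (\<Sum>r\<in>roots. (inner \<xi> (alpha r) / 2) *\<^sub>R alpha r))"
      by (simp add: h0_eq_sum)
    then show ?thesis
      using that by (simp add: linear_add linear_sum linear_scale)
  qed
  have "L1 (h0 idx N \<xi>) = L2 (h0 idx N \<xi>)"
    using assms(1,2) ebas by (simp add: h0_eq linear_0 linear_scale)
  then show ?thesis
    unfolding decomp[OF assms(1)] decomp[OF assms(2)] using roots by simp
qed

lemma Mkappa_solves_eigen:
  assumes \<kappa>: "\<And>r. r \<in> roots \<Longrightarrow> kappa km kp r \<ge> 0"
  shows "solves_eigen idx N km kp lam (Mkappa idx N km kp lam)"
  unfolding solves_eigen_iff_real regular_iff[symmetric]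
proof (intro allI impI)
  fix \<xi> x
  assume x: "x \<in> regular"
  obtain D where D: "(Mkappa idx N km kp lam has_derivative D) (at x)"
    using differentiable_Mkappa[OF \<kappa>] unfolding differentiable_def by blast
  have "linear (\<lambda>\<xi>. \<i> * rpair lam \<xi> * Mkappa idx N km kp lam x)"
    by (rule linearI) (simp_all add: rpair_add rpair_scaleR scaleR_conv_of_real[where 'a=complex] algebra_simps)
  then show "T_real idx N km kp (Mkappa idx N km kp lam) \<xi> x = \<i> * rpair lam \<xi> * Mkappa idx N km kp lam x"
    by (rule linear_eq_on_roots[OF linear_T_real[OF D]])
      (simp_all add: Mkappa_eigen_alpha[OF _ \<kappa> x] Mkappa_eigen_ebas_N)
qed

lemma real_analytic_Mkappa:
  assumes \<kappa>: "\<And>r. r \<in> roots \<Longrightarrow> kappa km kp r \<ge> 0" and N: "N \<ge> 2"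
  shows "real_analytic_on (Mkappa idx N km kp lam) UNIV"
proof -
  have "real_analytic_on (\<lambda>x. exp (\<i> * rpair lam (h0 idx N x))) UNIV"
  proof (cases "even N")
    case True
    then show ?thesis
      by (simp add: rpair_h0 real_analytic_on_const)
  next
    case False
    have "idx N \<noteq> idx 1"
      using N idx_eq_iff[of N 1] by auto
    \<comment> \<open>a dummy second coordinate with weight \<open>0\<close>; this is where \<open>N \<ge> 2\<close> is used\<close>
    from real_analytic_on_holomorphic_two_coords[OF holomorphic_on_exp this, of 0 "\<i> * lam $ idx N" 0 UNIV]
    show ?thesis
      using False by (simp add: rpair_h0 mult_ac)
  qed
  moreover have "real_analytic_on
      (\<lambda>x. Mconf (kappa km kp r) (\<i> / 2 * rpair lam (alpha r) * of_real (inner x (alpha r)))) UNIV"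
    if r: "r \<in> roots" for r
  proof -
    obtain b j where rr: "r = (b, j)"
      by (cases r)
    have "2 * j - 1 \<in> {1..N}" "2 * j \<in> {1..N}" "2 * j - 1 \<noteq> 2 * j"
      using r by (auto simp: rr)
    then have pq: "idx (2 * j - 1) \<noteq> idx (2 * j)"
      by (simp add: idx_eq_iff)
    define w where "w = \<i> / 2 * rpair lam (alpha r)"
    have eq: "(\<lambda>x. Mconf (kappa km kp r) (w * of_real (inner x (alpha r))))
        = (\<lambda>x. Mconf (kappa km kp r)
            (0 + w * of_real (x $ idx (2 * j - 1)) + (if b then w else - w) * of_real (x $ idx (2 * j))))"
      by (cases b) (simp_all add: rr inner_alpha_minus inner_alpha_plus algebra_simps)
    show ?thesis
      unfolding w_def[symmetric] eq
      by (rule real_analytic_on_holomorphic_two_coords[OF holomorphic_Mconf[OF \<kappa>[OF r]] pq])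
  qed
  ultimately show ?thesis
    unfolding Mkappa_eq[abs_def] by (intro real_analytic_on_mult real_analytic_on_prod) simp_all
qed

lemma Mkappa_at_0: "Mkappa idx N km kp lam 0 = 1"
  by (simp add: Mkappa_eq rpair_h0)

end

theorem proposition6p2:
  fixes idx :: "nat \<Rightarrow> 'n::finite" and N :: nat
    and km kp :: "nat \<Rightarrow> real" and lam :: "complex ^ 'n"
  assumes "bij_betw idx {1..N} (UNIV :: 'n set)"
    and "N \<ge> 2"
    and "\<forall>j\<in>{1..N div 2}. km j > 0 \<and> kp j > 0"
  shows "{f. real_analytic_on f UNIV \<and> solves_eigen idx N km kp lam f \<and> f 0 = 1}
           = {Mkappa idx N km kp lam}"
proof -
  interpret enumerated_coords idx N
    using assms(1) by unfold_locales
  have \<kappa>: "kappa km kp r \<ge> 0" if "r \<in> roots" for r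
    using assms(3) that by (auto simp: kappa_def less_imp_le)
  have "f = Mkappa idx N km kp lam"
    if "real_analytic_on f UNIV" "solves_eigen idx N km kp lam f" "f 0 = 1" for f
    using that isCont_real_analytic real_analytic_has_vector_derivative_line
    by (intro ext eigenfunction_unique \<kappa>) blast+
  then show ?thesis
    using real_analytic_Mkappa[OF \<kappa> assms(2)] Mkappa_solves_eigen[OF \<kappa>] Mkappa_at_0
    by blast
qed

end
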